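(* Let $U\subset\mathbb R^n$ be a smooth bounded domain and $H:\mathbb R^n\to\mathbb R$ satisfy: (H1) $H$ is smooth and $H(0)<0$; (H2) $\lim_{|p|\to\infty}H(p)/|p|=\infty$; (H3) there exist $\gamma,\delta>0$ with $DH(p)\cdot p-\gamma H(p)\ge\delta$ for all $p\in\mathbb R^n$. For $0<\epsilon<1$ let $u^{\epsilon}$ be the solution of $H(Du^{\epsilon})=\epsilon\Delta u^{\epsilon}$ in $U$, $u^{\epsilon}=0$ on $\partial U$. Then there is a constant $C$ independent of $\epsilon$ such that $\|u^{\epsilon}\|_{L^\infty(U)}\le C$ and $\|Du^{\epsilon}\|_{L^\infty(U)}\le C$. *)

theory Defs
  imports "HOL-Analysis.Analysis"
begin

definition partial_deriv :: "'n::finite \<Rightarrow> (real^'n \<Rightarrow> real) \<Rightarrow> real^'n \<Rightarrow> real" where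
  "partial_deriv i f x = deriv (\<lambda>t. f (x + t *\<^sub>R axis i 1)) 0"

definition grad :: "(real^'n::finite \<Rightarrow> real) \<Rightarrow> real^'n \<Rightarrow> real^'n" where
  "grad f x = (\<chi> i. partial_deriv i f x)"

definition laplacian :: "(real^'n::finite \<Rightarrow> real) \<Rightarrow> real^'n \<Rightarrow> real" where
  "laplacian f x = (\<Sum>i\<in>UNIV. partial_deriv i (partial_deriv i f) x)"

fun C_k_on :: "nat \<Rightarrow> (real^'n::finite) set \<Rightarrow> (real^'n \<Rightarrow> real) \<Rightarrow> bool" where
  "C_k_on 0 S f = continuous_on S f"
| "C_k_on (Suc k) S f = (f differentiable_on S \<and> continuous_on S f \<and>
      (\<forall>i. C_k_on k S (partial_deriv i f)))"

definition smooth_on :: "(real^'n::finite) set \<Rightarrow> (real^'n \<Rightarrow> real) \<Rightarrow> bool" where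
  "smooth_on S f = (\<forall>k. C_k_on k S f)"

definition smooth_bounded_domain :: "(real^'n::finite) set \<Rightarrow> bool" where
  "smooth_bounded_domain U = (open U \<and> connected U \<and> U \<noteq> {} \<and> bounded U \<and>
     (\<forall>x\<in>frontier U. \<exists>r>0. \<exists>\<phi>. smooth_on (ball x r) \<phi> \<and>
        (\<forall>y\<in>ball x r. grad \<phi> y \<noteq> 0) \<and>
        U \<inter> ball x r = {y\<in>ball x r. \<phi> y < 0}))"

definition is_solution :: "(real^'n::finite \<Rightarrow> real) \<Rightarrow> real \<Rightarrow> (real^'n) set \<Rightarrow> (real^'n \<Rightarrow> real) \<Rightarrow> bool" where
  "is_solution H eps U u = (C_k_on 2 U u \<and> continuous_on (closure U) u \<and>
     (\<forall>x\<in>frontier U. u x = 0) \<and>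
     (\<forall>x\<in>U. H (grad u x) = eps * laplacian u x))"

end

theory Submission
  imports Defs
begin

text \<open>Every \<open>u\<^sup>\<epsilon>\<close> is nonnegative, since \<open>H(0) < 0\<close> forbids an interior minimum. As \<open>U\<close> satisfies a
  uniform exterior ball condition, a barrier \<open>K (\<rho>\<^sup>-\<^sup>2\<^sup>N - |y - z|\<^sup>-\<^sup>2\<^sup>N)\<close> centred outside \<open>U\<close>, with \<open>K\<close>
  so large that \<open>H > 0\<close> at its gradients, dominates \<open>u\<^sup>\<epsilon>\<close>; this gives \<open>u\<^sup>\<epsilon>(y) \<le> C |y - x\<^sub>0|\<close> for
  every boundary point \<open>x\<^sub>0\<close>. In the interior one compares \<open>(\<mu>/k) u\<^sup>\<epsilon>(k y)\<close>, \<open>k = \<mu>\<^bsup>\<gamma>-1\<^esup>\<close>, with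
  the translate \<open>u\<^sup>\<epsilon>(h + y)\<close>: by (H3) the former is a strict subsolution, so the difference is
  largest on the boundary, where the boundary estimate controls it. Letting \<open>\<mu> \<rightarrow> 1\<close> gives
  \<open>|u\<^sup>\<epsilon>(x) - u\<^sup>\<epsilon>(x + h)| \<le> C |h|\<close>, hence the gradient bound; the constants depend only on
  \<open>H\<close> and \<open>U\<close>.\<close>

lemma has_derivative_along_line:
  fixes f :: "real^'n \<Rightarrow> real"
  assumes "(f has_derivative f') (at y)"
  shows "((\<lambda>t. f (y + t *\<^sub>R e)) has_real_derivative f' e) (at 0)"
proof -
  have lin: "linear f'" using assms has_derivative_linear by blast
  have "((\<lambda>t. y + t *\<^sub>R e) has_derivative (\<lambda>t. t *\<^sub>R e)) (at 0)"
    by (auto intro!: derivative_eq_intros)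
  then have "((\<lambda>t. f (y + t *\<^sub>R e)) has_derivative (\<lambda>t. f' (t *\<^sub>R e))) (at 0)"
    using has_derivative_compose[of "\<lambda>t. y + t *\<^sub>R e" _ 0 UNIV f f'] assms by simp
  moreover have "(\<lambda>t. f' (t *\<^sub>R e)) = (*) (f' e)"
    using linear_cmul[OF lin] by (auto simp: mult.commute)
  ultimately show ?thesis by (simp add: has_field_derivative_def)
qed

lemma grad_inner_axis: "grad f y \<bullet> axis i 1 = partial_deriv i f y"
  by (simp add: grad_def inner_axis)

lemma grad_inner_eq_sum: "grad f p \<bullet> d = (\<Sum>i\<in>UNIV. d $ i * partial_deriv i f p)"
  by (simp add: grad_def inner_vec_def mult.commute)

lemma has_derivative_eq_grad_inner:
  fixes f :: "real^'n \<Rightarrow> real"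
  assumes "(f has_derivative f') (at y)"
  shows "f' e = grad f y \<bullet> e"
proof -
  have lin: "linear f'" using assms has_derivative_linear by blast
  have pd: "partial_deriv i f y = f' (axis i 1)" for i
    unfolding partial_deriv_def using has_derivative_along_line[OF assms] DERIV_imp_deriv by blast
  have "f' e = f' (\<Sum>i\<in>UNIV. (e$i) *s axis i 1)" by (simp add: basis_expansion)
  also have "\<dots> = (\<Sum>i\<in>UNIV. e$i * f' (axis i 1))"
    using lin by (simp add: linear_sum linear_cmul scalar_mult_eq_scaleR)
  finally show ?thesis by (simp add: grad_inner_eq_sum pd)
qed

lemma has_real_derivative_along_line_grad:
  fixes f :: "real^'n \<Rightarrow> real"
  assumes "f differentiable (at (x + s *\<^sub>R e))"
  shows "((\<lambda>t. f (x + t *\<^sub>R e)) has_real_derivative (grad f (x + s *\<^sub>R e) \<bullet> e)) (at s)"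
proof -
  obtain f' where d: "(f has_derivative f') (at (x + s *\<^sub>R e))"
    using assms differentiable_def by blast
  have "((\<lambda>t. f ((x + s *\<^sub>R e) + t *\<^sub>R e)) has_real_derivative (grad f (x + s *\<^sub>R e) \<bullet> e)) (at 0)"
    using has_derivative_along_line[OF d] has_derivative_eq_grad_inner[OF d] by simp
  then have "((\<lambda>t. f (x + (t + s) *\<^sub>R e)) has_real_derivative (grad f (x + s *\<^sub>R e) \<bullet> e)) (at 0)"
    by (simp add: algebra_simps)
  then show ?thesis using DERIV_shift[of "\<lambda>t. f (x + t *\<^sub>R e)" _ 0 s] by simp
qed

lemma C2_on_open_differentiable:
  fixes u :: "real^'n \<Rightarrow> real"
  assumes "C_k_on 2 U u" "open U" "y \<in> U"
  shows "u differentiable (at y)" "partial_deriv i u differentiable (at y)"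
  using assms differentiable_on_eq_differentiable_at by (auto simp: numeral_2_eq_2)

section \<open>Comparison at interior extrema\<close>

lemma DERIV_local_max_second_order:
  fixes g g' :: "real \<Rightarrow> real"
  assumes "\<delta> > 0" and der: "\<And>t. \<bar>t\<bar> < \<delta> \<Longrightarrow> (g has_real_derivative g' t) (at t)"
    and der2: "(g' has_real_derivative d) (at 0)"
    and max: "\<And>t. \<bar>t\<bar> < \<delta> \<Longrightarrow> g t \<le> g 0"
  shows "g' 0 = 0 \<and> d \<le> 0"
proof
  show g'0: "g' 0 = 0"
    using DERIV_local_max[OF der[of 0] \<open>\<delta> > 0\<close>] max \<open>\<delta> > 0\<close> by auto
  show "d \<le> 0"
  proof (rule ccontr)
    assume "\<not> d \<le> 0"
    then obtain d1 where d1: "d1 > 0" "\<And>h. h > 0 \<Longrightarrow> h < d1 \<Longrightarrow> g' 0 < g' (0 + h)"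
      using DERIV_pos_inc_right[OF der2] by force
    define h where "h = min d1 \<delta> / 2"
    have h: "h > 0" "h < d1" "h < \<delta>" using d1 \<open>\<delta> > 0\<close> by (auto simp: h_def)
    then obtain z where z: "0 < z" "z < h" "g h - g 0 = h * g' z"
      using MVT2[of 0 h g g'] der by auto
    have "g' z > 0" using d1(2)[of z] z h g'0 by auto
    then have "g h > g 0" using z h by (simp add: algebra_simps)
    then show False using max[of h] h by auto
  qed
qed

text \<open>Solutions are only twice differentiable inside \<open>U\<close>, whereas the comparison functions
  below are explicit; they are compared through the first and second derivatives \<open>g\<close>, \<open>d\<close>
  of their restrictions to coordinate lines.\<close>

definition coord_derivs2 ::
    "(real^'n \<Rightarrow> real) \<Rightarrow> real^'n \<Rightarrow> 'n \<Rightarrow> (real \<Rightarrow> real) \<Rightarrow> real \<Rightarrow> bool" where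
  "coord_derivs2 f x i g d \<longleftrightarrow>
     (\<exists>\<delta>>0. \<forall>t. \<bar>t\<bar> < \<delta> \<longrightarrow> ((\<lambda>s. f (x + s *\<^sub>R axis i 1)) has_real_derivative g t) (at t)) \<and>
     (g has_real_derivative d) (at 0)"

lemma coord_derivs2_const: "coord_derivs2 (\<lambda>y. c) x i (\<lambda>t. 0) 0"
  unfolding coord_derivs2_def by (auto intro: exI[of _ 1])

lemma coord_derivs2_local_max_diff:
  assumes max: "\<exists>\<delta>>0. \<forall>y. dist y x < \<delta> \<longrightarrow> f1 y - f2 y \<le> f1 x - f2 x"
    and f1: "coord_derivs2 f1 x i g1 d1" and f2: "coord_derivs2 f2 x i g2 d2"
  shows "g1 0 = g2 0 \<and> d1 \<le> d2"
proof -
  obtain \<delta>0 where \<delta>0: "\<delta>0 > 0" "\<forall>y. dist y x < \<delta>0 \<longrightarrow> f1 y - f2 y \<le> f1 x - f2 x"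
    using max by blast
  obtain \<delta>1 where \<delta>1: "\<delta>1 > 0"
      "\<forall>t. \<bar>t\<bar> < \<delta>1 \<longrightarrow> ((\<lambda>s. f1 (x + s *\<^sub>R axis i 1)) has_real_derivative g1 t) (at t)"
    and e1: "(g1 has_real_derivative d1) (at 0)" using f1 unfolding coord_derivs2_def by blast
  obtain \<delta>2 where \<delta>2: "\<delta>2 > 0"
      "\<forall>t. \<bar>t\<bar> < \<delta>2 \<longrightarrow> ((\<lambda>s. f2 (x + s *\<^sub>R axis i 1)) has_real_derivative g2 t) (at t)"
    and e2: "(g2 has_real_derivative d2) (at 0)" using f2 unfolding coord_derivs2_def by blast
  define \<delta> where "\<delta> = min \<delta>0 (min \<delta>1 \<delta>2)"
  have "\<delta> > 0" using \<delta>0 \<delta>1 \<delta>2 by (simp add: \<delta>_def)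
  have "g1 0 - g2 0 = 0 \<and> d1 - d2 \<le> 0"
  proof (rule DERIV_local_max_second_order[OF \<open>\<delta> > 0\<close>,
        where g = "\<lambda>s. f1 (x + s *\<^sub>R axis i 1) - f2 (x + s *\<^sub>R axis i 1)"])
    fix t :: real assume t: "\<bar>t\<bar> < \<delta>"
    show "((\<lambda>s. f1 (x + s *\<^sub>R axis i 1) - f2 (x + s *\<^sub>R axis i 1)) has_real_derivative
        g1 t - g2 t) (at t)"
      using \<delta>1 \<delta>2 t by (auto simp: \<delta>_def intro!: DERIV_diff)
    have "dist (x + t *\<^sub>R axis i 1) x = \<bar>t\<bar>" by (simp add: dist_norm norm_axis_1)
    then show "f1 (x + t *\<^sub>R axis i 1) - f2 (x + t *\<^sub>R axis i 1)
        \<le> f1 (x + 0 *\<^sub>R axis i 1) - f2 (x + 0 *\<^sub>R axis i 1)"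
      using \<delta>0 t by (auto simp: \<delta>_def)
  qed (use e1 e2 in \<open>rule DERIV_diff\<close>)
  then show ?thesis by simp
qed

lemma coord_derivs2_C2:
  fixes u :: "real^'n \<Rightarrow> real"
  assumes u: "C_k_on 2 U u" and U: "open U" "x \<in> U" and eq: "\<forall>y\<in>U. f y = u y"
  shows "coord_derivs2 f x i (\<lambda>t. partial_deriv i u (x + t *\<^sub>R axis i 1))
           (partial_deriv i (partial_deriv i u) x)"
  unfolding coord_derivs2_def
proof
  obtain \<delta> where \<delta>: "\<delta> > 0" "ball x \<delta> \<subseteq> U" using U openE by blast
  have "open ((\<lambda>s::real. x + s *\<^sub>R axis i 1) -` U)"
    by (rule open_vimage[OF U(1)]) (auto intro!: continuous_intros)
  then have T: "open {s::real. x + s *\<^sub>R axis i 1 \<in> U}" by (simp add: vimage_def)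
  show "\<exists>\<delta>>0. \<forall>t. \<bar>t\<bar> < \<delta> \<longrightarrow> ((\<lambda>s. f (x + s *\<^sub>R axis i 1)) has_real_derivative
      partial_deriv i u (x + t *\<^sub>R axis i 1)) (at t)"
  proof (intro exI[of _ \<delta>] conjI allI impI)
    fix t :: real assume t: "\<bar>t\<bar> < \<delta>"
    have "dist x (x + t *\<^sub>R axis i 1) = \<bar>t\<bar>" by (simp add: dist_norm)
    then have xt: "x + t *\<^sub>R axis i 1 \<in> U" using \<delta> t by auto
    have "((\<lambda>s. u (x + s *\<^sub>R axis i 1)) has_real_derivative partial_deriv i u (x + t *\<^sub>R axis i 1)) (at t)"
      using has_real_derivative_along_line_grad[of u x t "axis i 1"]
        C2_on_open_differentiable[OF u U(1) xt] by (simp add: grad_inner_axis)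
    then show "((\<lambda>s. f (x + s *\<^sub>R axis i 1)) has_real_derivative
        partial_deriv i u (x + t *\<^sub>R axis i 1)) (at t)"
      by (rule has_field_derivative_transform_within_open[OF _ T]) (use xt eq in auto)
  qed (use \<delta> in auto)
  show "((\<lambda>t. partial_deriv i u (x + t *\<^sub>R axis i 1)) has_real_derivative
      partial_deriv i (partial_deriv i u) x) (at 0)"
    using has_real_derivative_along_line_grad[of "partial_deriv i u" x 0 "axis i 1"]
      C2_on_open_differentiable[OF u U] by (simp add: grad_inner_axis)
qed

lemma coord_derivs2_affine:
  assumes f: "coord_derivs2 f (m + k *\<^sub>R x) i g d" and k: "k > 0"
  shows "coord_derivs2 (\<lambda>y. A * f (m + k *\<^sub>R y)) x i (\<lambda>t. A * k * g (k * t)) (A * k * k * d)"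
  unfolding coord_derivs2_def
proof
  obtain \<delta> where \<delta>: "\<delta> > 0"
      "\<forall>t. \<bar>t\<bar> < \<delta> \<longrightarrow> ((\<lambda>s. f (m + k *\<^sub>R x + s *\<^sub>R axis i 1)) has_real_derivative g t) (at t)"
    and e: "(g has_real_derivative d) (at 0)" using f unfolding coord_derivs2_def by blast
  show "\<exists>\<delta>>0. \<forall>t. \<bar>t\<bar> < \<delta> \<longrightarrow> ((\<lambda>s. A * f (m + k *\<^sub>R (x + s *\<^sub>R axis i 1))) has_real_derivative
      A * k * g (k * t)) (at t)"
  proof (intro exI[of _ "\<delta> / k"] conjI allI impI)
    fix t :: real assume t: "\<bar>t\<bar> < \<delta> / k"
    have "\<bar>k * t\<bar> < \<delta>" using t k by (simp add: abs_mult field_simps)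
    then have D: "((\<lambda>s. f (m + k *\<^sub>R x + s *\<^sub>R axis i 1)) has_real_derivative g (k * t)) (at (k * t))"
      using \<delta> by auto
    have "((\<lambda>s. f (m + k *\<^sub>R x + (k * s) *\<^sub>R axis i 1)) has_real_derivative g (k * t) * k) (at t)"
      using DERIV_chain2[where g="\<lambda>s. k * s" and x=t, OF D, of k]
      by (auto intro!: derivative_eq_intros)
    from DERIV_cmult[OF this, of A]
    show "((\<lambda>s. A * f (m + k *\<^sub>R (x + s *\<^sub>R axis i 1))) has_real_derivative A * k * g (k * t)) (at t)"
      by (simp add: scaleR_add_right add.assoc mult.commute mult.left_commute mult.assoc)
  qed (use \<delta> k in auto)
  have "((\<lambda>t. g (k * t)) has_real_derivative d * k) (at 0)"
    using DERIV_chain2[where g="\<lambda>t. k * t" and x=0] e by (auto intro!: derivative_eq_intros)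
  from DERIV_cmult[OF this, of "A * k"]
  show "((\<lambda>t. A * k * g (k * t)) has_real_derivative A * k * k * d) (at 0)"
    by (simp add: ac_simps)
qed

definition zero_ext :: "(real^'n) set \<Rightarrow> (real^'n \<Rightarrow> real) \<Rightarrow> real^'n \<Rightarrow> real" where
  "zero_ext U u y = (if y \<in> U then u y else 0)"

lemma continuous_on_zero_ext:
  assumes "continuous_on (closure U) u" "\<forall>x\<in>frontier U. u x = 0" "open U"
  shows "continuous_on UNIV (zero_ext U u)"
proof -
  have "continuous_on (closure U) (zero_ext U u)"
    by (rule continuous_on_eq[OF assms(1)])
      (use assms(2,3) in \<open>auto simp: zero_ext_def frontier_def interior_open\<close>)
  moreover have "continuous_on (- U) (zero_ext U u)"
    by (rule continuous_on_eq[OF continuous_on_const[of _ 0]]) (simp add: zero_ext_def)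
  ultimately have "continuous_on (closure U \<union> - U) (zero_ext U u)"
    using assms(3) by (intro continuous_on_closed_Un) auto
  moreover have "closure U \<union> - U = UNIV" using closure_subset by auto
  ultimately show ?thesis by simp
qed

lemma continuous_on_zero_ext_solution:
  assumes "is_solution H eps U u" "open U"
  shows "continuous_on UNIV (zero_ext U u)"
  using assms by (intro continuous_on_zero_ext) (auto simp: is_solution_def)

lemma C2_local_max_diff:
  fixes u :: "real^'n \<Rightarrow> real"
  assumes u: "C_k_on 2 U u" and U: "open U" "x \<in> U"
    and V: "\<And>i. coord_derivs2 V x i (gV i) (dV i)"
    and max: "\<exists>\<delta>>0. \<forall>y. dist y x < \<delta> \<longrightarrow> zero_ext U u y - V y \<le> zero_ext U u x - V x"
  shows "grad u x = (\<chi> i. gV i 0)" "laplacian u x \<le> (\<Sum>i\<in>UNIV. dV i)"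
proof -
  have "partial_deriv i u x = gV i 0 \<and> partial_deriv i (partial_deriv i u) x \<le> dV i" for i
    using coord_derivs2_local_max_diff[OF max coord_derivs2_C2[OF u U] V]
    by (simp add: zero_ext_def)
  then show "grad u x = (\<chi> i. gV i 0)" "laplacian u x \<le> (\<Sum>i\<in>UNIV. dV i)"
    unfolding grad_def laplacian_def by (auto intro: sum_mono)
qed

lemma C2_local_min_diff:
  fixes u :: "real^'n \<Rightarrow> real"
  assumes u: "C_k_on 2 U u" and U: "open U" "x \<in> U"
    and V: "\<And>i. coord_derivs2 V x i (gV i) (dV i)"
    and min: "\<exists>\<delta>>0. \<forall>y. dist y x < \<delta> \<longrightarrow> V y - zero_ext U u y \<le> V x - zero_ext U u x"
  shows "grad u x = (\<chi> i. gV i 0)" "(\<Sum>i\<in>UNIV. dV i) \<le> laplacian u x"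
proof -
  have "partial_deriv i u x = gV i 0 \<and> dV i \<le> partial_deriv i (partial_deriv i u) x" for i
    using coord_derivs2_local_max_diff[OF min V coord_derivs2_C2[OF u U]]
    by (simp add: zero_ext_def)
  then show "grad u x = (\<chi> i. gV i 0)" "(\<Sum>i\<in>UNIV. dV i) \<le> laplacian u x"
    unfolding grad_def laplacian_def by (auto intro: sum_mono)
qed

lemma le_on_closure_if_no_interior_local_max:
  fixes w :: "'a::heine_borel \<Rightarrow> real"
  assumes \<Omega>: "open \<Omega>" "bounded \<Omega>" and w: "continuous_on (closure \<Omega>) w"
    and no_max: "\<And>x. x \<in> \<Omega> \<Longrightarrow> \<exists>\<delta>>0. \<forall>y. dist y x < \<delta> \<longrightarrow> w y \<le> w x \<Longrightarrow> False"
    and frontier: "\<And>y. y \<in> frontier \<Omega> \<Longrightarrow> w y \<le> M"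
    and y: "y \<in> closure \<Omega>"
  shows "w y \<le> M"
proof -
  have "compact (closure \<Omega>)" "closure \<Omega> \<noteq> {}" using \<Omega> y by (auto simp: compact_closure)
  then obtain p where p: "p \<in> closure \<Omega>" "\<forall>y\<in>closure \<Omega>. w y \<le> w p"
    using continuous_attains_sup[OF _ _ w] by blast
  have "p \<notin> \<Omega>"
  proof
    assume "p \<in> \<Omega>"
    then obtain \<delta> where "\<delta> > 0" "ball p \<delta> \<subseteq> \<Omega>" using \<Omega> openE by blast
    have "\<forall>y. dist y p < \<delta> \<longrightarrow> w y \<le> w p"
    proof (intro allI impI)
      fix y assume "dist y p < \<delta>"
      then have "y \<in> \<Omega>" using \<open>ball p \<delta> \<subseteq> \<Omega>\<close> by (auto simp: dist_commute)
      then show "w y \<le> w p" using p closure_subset[of \<Omega>] by auto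
    qed
    then show False using no_max[OF \<open>p \<in> \<Omega>\<close>] \<open>\<delta> > 0\<close> by blast
  qed
  then have "p \<in> frontier \<Omega>" using p \<Omega> by (simp add: frontier_def interior_open)
  then have "w p \<le> M" by (rule frontier)
  moreover have "w y \<le> w p" using p(2) y by blast
  ultimately show ?thesis by linarith
qed

lemma solution_nonneg:
  fixes u :: "real^'n \<Rightarrow> real"
  assumes sol: "is_solution H eps U u" and U: "open U" "bounded U" and eps: "eps > 0"
    and H0: "H 0 < 0"
  shows "zero_ext U u y \<ge> 0"
proof (cases "y \<in> U")
  case True
  have u: "C_k_on 2 U u" using sol by (simp add: is_solution_def)
  have "- zero_ext U u y \<le> 0"
  proof (rule le_on_closure_if_no_interior_local_max[OF U])
    show "continuous_on (closure U) (\<lambda>y. - zero_ext U u y)"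
      using continuous_on_zero_ext_solution[OF sol U(1)]
      by (auto intro!: continuous_intros intro: continuous_on_subset)
  next
    fix x assume x: "x \<in> U"
      and "\<exists>\<delta>>0. \<forall>y. dist y x < \<delta> \<longrightarrow> - zero_ext U u y \<le> - zero_ext U u x"
    then have "grad u x = 0" and "0 \<le> laplacian u x"
      using C2_local_min_diff[OF u U(1) x coord_derivs2_const] by (auto simp: vec_eq_iff)
    moreover have "H (grad u x) = eps * laplacian u x" using sol x by (simp add: is_solution_def)
    ultimately have "H 0 \<ge> 0" using eps by simp
    then show False using H0 by simp
  next
    fix y assume "y \<in> frontier U"
    then show "- zero_ext U u y \<le> 0" using U(1) by (simp add: zero_ext_def frontier_def interior_open)
  qed (use True closure_subset in blast)
  then show ?thesis by simp
qed (simp add: zero_ext_def)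

section \<open>A boundary barrier\<close>

lemma DERIV_one_over_power:
  fixes P :: "real \<Rightarrow> real"
  assumes "(P has_real_derivative P') (at s)" "P s \<noteq> 0"
  shows "((\<lambda>s. 1 / (P s) ^ N) has_real_derivative (- (real N * P' / (P s) ^ (N + 1)))) (at s)"
proof -
  have D: "((\<lambda>s. inverse ((P s) ^ N)) has_real_derivative
      - ((real N * (P' * P s ^ (N - Suc 0))) * inverse ((P s ^ N) ^ Suc (Suc 0)))) (at s)"
    by (rule DERIV_inverse_fun[OF DERIV_power[OF assms(1)]]) (use assms(2) in simp)
  have "- ((real N * (P' * P s ^ (N - Suc 0))) * inverse ((P s ^ N) ^ Suc (Suc 0)))
      = - (real N * P' / (P s) ^ (N + 1))"
    using assms(2) by (cases N) (simp_all add: field_simps power2_eq_square power_add)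
  with D show ?thesis by (simp only: divide_inverse mult_1_left)
qed

lemma norm_add_axis_power2:
  fixes w :: "real^'n"
  shows "(norm (w + s *\<^sub>R axis i 1))^2 = (norm w)^2 + 2 * (w $ i) * s + s^2"
  unfolding power2_norm_eq_inner
  by (simp add: inner_add_left inner_add_right inner_axis inner_axis' inner_axis_axis
      inner_commute algebra_simps power2_eq_square)

lemma norm_power2_eq_sum: "(norm (w::real^'n))^2 = (\<Sum>i\<in>UNIV. (w $ i)^2)"
  unfolding power2_norm_eq_inner by (simp add: inner_vec_def power2_eq_square)

lemma power_Suc_diff_le:
  fixes a b :: real
  assumes "0 \<le> a" "a \<le> b"
  shows "b ^ Suc m - a ^ Suc m \<le> real (Suc m) * b ^ m * (b - a)"
proof (induction m)
  case (Suc m)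
  have "b ^ Suc (Suc m) - a ^ Suc (Suc m) = b * (b ^ Suc m - a ^ Suc m) + a ^ Suc m * (b - a)"
    by (simp add: algebra_simps)
  also have "\<dots> \<le> b * (real (Suc m) * b ^ m * (b - a)) + b ^ Suc m * (b - a)"
    using Suc assms by (intro add_mono mult_left_mono mult_right_mono power_mono) auto
  also have "\<dots> = real (Suc (Suc m)) * b ^ Suc m * (b - a)" by (simp add: algebra_simps)
  finally show ?case .
qed simp

lemma one_over_power_diff_le:
  fixes a b :: real
  assumes "0 < a" "a \<le> b" "M > 0"
  shows "1 / a ^ M - 1 / b ^ M \<le> real M * (b - a) / a ^ (M + 1)"
proof -
  obtain m where M: "M = Suc m" using assms(3) gr0_implies_Suc by blast
  have b: "b > 0" using assms by simp
  have "1 / a ^ M - 1 / b ^ M = (b ^ M - a ^ M) / (a ^ M * b ^ M)"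
    using assms b by (simp add: field_simps)
  also have "\<dots> \<le> (real M * b ^ m * (b - a)) / (a ^ M * b ^ M)"
    using power_Suc_diff_le[of a b m] M assms b by (intro divide_right_mono) auto
  also have "\<dots> = real M * (b - a) / (a ^ M * b)"
    using M b assms(1) by (simp add: field_simps)
  also have "\<dots> \<le> real M * (b - a) / (a ^ M * a)"
    using assms b by (intro divide_left_mono mult_left_mono mult_nonneg_nonneg) auto
  finally show ?thesis by (simp add: mult.commute)
qed

lemma norm_ge_if_ball_disjoint:
  fixes z :: "'a::real_normed_vector"
  assumes "ball z \<rho> \<inter> U = {}" "y \<in> closure U"
  shows "\<rho> \<le> norm (y - z)"
proof -
  have "ball z \<rho> \<inter> closure U = {}" using assms(1) open_Int_closure_eq_empty[of "ball z \<rho>" U] by simp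
  then have "y \<notin> ball z \<rho>" using assms(2) by blast
  then show ?thesis by (simp add: dist_norm norm_minus_commute)
qed

text \<open>With \<open>N\<close> the dimension, \<open>y \<mapsto> -|y - z|\<^sup>-\<^sup>2\<^sup>N\<close> is superharmonic away from \<open>z\<close>; the barrier
  vanishes on the sphere \<open>|y - z| = \<rho>\<close> and its gradient is large when \<open>K\<close> is.\<close>

definition barrier :: "real \<Rightarrow> real \<Rightarrow> real^'n \<Rightarrow> real^'n \<Rightarrow> real" where
  "barrier K \<rho> z y = K * (1 / \<rho> ^ (2 * CARD('n)) - 1 / ((norm (y - z))^2) ^ CARD('n))"

lemma barrier_coord_derivs2:
  fixes x z :: "real^'n"
  assumes "x \<noteq> z"
  defines "N \<equiv> CARD('n)" and "Q \<equiv> (norm (x - z))^2"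
  shows "coord_derivs2 (barrier K \<rho> z) x i
     (\<lambda>t. K * real N * (2 * (x - z) $ i + 2 * t) / (Q + 2 * (x - z) $ i * t + t^2) ^ (N + 1))
     (K * real N * (2 / Q ^ (N + 1) - real (N + 1) * (2 * (x - z) $ i) ^ 2 / Q ^ (N + 2)))"
proof -
  define a where "a = (x - z) $ i"
  define P where "P t = Q + 2 * a * t + t^2" for t
  have P_norm: "P t = (norm ((x - z) + t *\<^sub>R axis i 1))^2" for t
    unfolding P_def Q_def a_def by (simp only: norm_add_axis_power2)
  have line: "(\<lambda>s. barrier K \<rho> z (x + s *\<^sub>R axis i 1)) = (\<lambda>s. K * (1 / \<rho> ^ (2 * N) - 1 / (P s) ^ N))"
    by (simp add: barrier_def P_norm N_def algebra_simps)
  have Q0: "Q > 0" using assms(1) by (simp add: Q_def)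
  have P_pos: "P t > 0" if "\<bar>t\<bar> < norm (x - z)" for t
  proof -
    have "norm (x - z) \<le> norm ((x - z) + t *\<^sub>R axis i 1) + \<bar>t\<bar>"
      using norm_triangle_ineq4[of "x - z + t *\<^sub>R axis i 1" "t *\<^sub>R axis i 1"] by simp
    then have "norm ((x - z) + t *\<^sub>R axis i 1) > 0" using that by linarith
    then show ?thesis by (simp add: P_norm)
  qed
  have dP: "(P has_real_derivative 2 * a + 2 * t) (at t)" for t
    unfolding P_def by (auto intro!: derivative_eq_intros)
  show ?thesis unfolding coord_derivs2_def
  proof (intro conjI exI[of _ "norm (x - z)"] allI impI)
    show "norm (x - z) > 0" using assms(1) by simp
    fix t :: real assume t: "\<bar>t\<bar> < norm (x - z)"
    have "((\<lambda>s. K * (1 / \<rho> ^ (2 * N) - 1 / (P s) ^ N)) has_real_derivative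
        K * (0 - (- (real N * (2 * a + 2 * t) / (P t) ^ (N + 1))))) (at t)"
      using P_pos[OF t] by (intro DERIV_cmult DERIV_diff DERIV_const DERIV_one_over_power dP) simp
    then show "((\<lambda>s. barrier K \<rho> z (x + s *\<^sub>R axis i 1)) has_real_derivative
        K * real N * (2 * (x - z) $ i + 2 * t) / (Q + 2 * (x - z) $ i * t + t\<^sup>2) ^ (N + 1)) (at t)"
      unfolding line by (simp add: P_def a_def mult.assoc)
  next
    have P0: "P 0 = Q" by (simp add: P_def)
    have "((\<lambda>t. K * real N * ((2 * a + 2 * t) * (1 / (P t) ^ (N + 1)))) has_real_derivative
        K * real N * ((2 * a + 2 * 0) * (- (real (N + 1) * (2 * a + 2 * 0) / (P 0) ^ (N + 1 + 1))) +
           2 * (1 / (P 0) ^ (N + 1)))) (at 0)"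
      using Q0 P0 by (intro DERIV_cmult DERIV_mult' DERIV_one_over_power dP) (auto intro!: derivative_eq_intros)
    then show "((\<lambda>t. K * real N * (2 * (x - z) $ i + 2 * t) / (Q + 2 * (x - z) $ i * t + t\<^sup>2) ^ (N + 1))
        has_real_derivative K * real N * (2 / Q ^ (N + 1) - real (N + 1) * (2 * (x - z) $ i)\<^sup>2 / Q ^ (N + 2))) (at 0)"
      unfolding P0 by (simp add: P_def a_def field_simps power2_eq_square)
  qed
qed

lemma barrier_laplacian_neg:
  fixes x z :: "real^'n"
  assumes "x \<noteq> z" "K > 0"
  defines "N \<equiv> CARD('n)" and "Q \<equiv> (norm (x - z))^2"
  shows "(\<Sum>i\<in>UNIV. K * real N * (2 / Q ^ (N + 1) - real (N + 1) * (2 * (x - z) $ i) ^ 2 / Q ^ (N + 2))) < 0"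
proof -
  have Q0: "Q > 0" using assms(1) by (simp add: Q_def)
  have sum_sq: "(\<Sum>i\<in>UNIV. ((x - z) $ i)^2) = Q" by (simp only: Q_def norm_power2_eq_sum)
  have summand: "K * real N * (2 / Q ^ (N + 1) - real (N + 1) * (2 * (x - z) $ i) ^ 2 / Q ^ (N + 2))
      = K * real N * 2 / Q ^ (N + 1) - (4 * K * real N * real (N + 1) / Q ^ (N + 2)) * ((x - z) $ i)^2" for i
    using Q0 by (simp add: field_simps power2_eq_square)
  have "(\<Sum>i\<in>UNIV. K * real N * (2 / Q ^ (N + 1) - real (N + 1) * (2 * (x - z) $ i) ^ 2 / Q ^ (N + 2)))
      = real N * (K * real N * 2 / Q ^ (N + 1))
        - (4 * K * real N * real (N + 1) / Q ^ (N + 2)) * (\<Sum>i\<in>UNIV. ((x - z) $ i)^2)"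
    unfolding summand by (simp add: sum_subtractf sum_distrib_left N_def)
  also have "\<dots> = K * real N * (2 * real N - 4 * real (N + 1)) / Q ^ (N + 1)"
    using Q0 unfolding sum_sq by (simp add: power_add field_simps)
  also have "\<dots> < 0"
    using assms(2) Q0 by (intro divide_neg_pos mult_pos_neg) (auto simp: N_def)
  finally show ?thesis .
qed

lemma norm_barrier_grad:
  fixes x z :: "real^'n"
  assumes "K \<ge> 0"
  defines "N \<equiv> CARD('n)" and "Q \<equiv> (norm (x - z))^2"
  shows "norm (\<chi> i. K * real N * (2 * (x - z) $ i) / Q ^ (N + 1)) = 2 * K * real N / norm (x - z) ^ (2 * N + 1)"
proof -
  have "(\<chi> i. K * real N * (2 * (x - z) $ i) / Q ^ (N + 1)) = (2 * K * real N / Q ^ (N + 1)) *\<^sub>R (x - z)"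
    by (simp add: vec_eq_iff)
  moreover have "Q ^ (N + 1) = norm (x - z) ^ (2 * N + 1) * norm (x - z)"
  proof -
    have "Q ^ (N + 1) = norm (x - z) ^ (2 * (N + 1))" unfolding Q_def by (rule power_mult[symmetric])
    also have "2 * (N + 1) = Suc (2 * N + 1)" by simp
    finally show ?thesis by (simp only: power_Suc2)
  qed
  ultimately show ?thesis using assms(1) by (cases "x = z") (auto simp: power2_eq_square)
qed

lemma solution_minus_barrier_no_local_max:
  fixes u :: "real^'n \<Rightarrow> real"
  assumes sol: "is_solution H eps U u" and U: "open U" and eps: "eps > 0"
    and HR: "\<forall>p. norm p \<ge> R \<longrightarrow> H p > 0" and R: "R > 0"
    and x: "x \<in> U" "x \<noteq> z" "norm (x - z) \<le> D" and K: "R * D ^ (2 * CARD('n) + 1) \<le> K"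
    and max: "\<exists>\<delta>>0. \<forall>y. dist y x < \<delta> \<longrightarrow>
       zero_ext U u y - barrier K \<rho> z y \<le> zero_ext U u x - barrier K \<rho> z x"
  shows False
proof -
  define N where "N = CARD('n)"
  define d where "d = norm (x - z)"
  have N1: "N \<ge> 1" by (simp add: N_def Suc_leI)
  have d: "d > 0" "d \<le> D" using x by (simp_all add: d_def)
  have K0: "K > 0" using R d K by (smt (verit) mult_pos_pos zero_less_power)
  have u: "C_k_on 2 U u" using sol by (simp add: is_solution_def)
  note derivs = C2_local_max_diff[OF u U x(1) barrier_coord_derivs2[OF x(2)] max]
  have "laplacian u x < 0"
    using derivs(2) barrier_laplacian_neg[OF x(2) K0] by simp
  then have "H (grad u x) < 0"
    using sol x(1) eps by (simp add: is_solution_def mult_pos_neg)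
  moreover have "R \<le> norm (grad u x)"
  proof -
    have "norm (grad u x) = 2 * K * real N / d ^ (2 * N + 1)"
      using derivs(1) norm_barrier_grad[of K x z] K0 by (simp add: N_def d_def)
    also have "\<dots> \<ge> 2 * K * real N / D ^ (2 * N + 1)"
      using d K0 N1 by (intro divide_left_mono power_mono mult_pos_pos) auto
    also have "2 * K * real N / D ^ (2 * N + 1) \<ge> 2 * real N * R"
      using K d by (simp add: N_def pos_le_divide_eq mult.commute mult.left_commute)
    finally show ?thesis using N1 R by (smt (verit) of_nat_1 of_nat_mono mult_le_cancel_right2)
  qed
  ultimately show False using HR by fastforce
qed

lemma solution_le_barrier:
  fixes u :: "real^'n \<Rightarrow> real"
  assumes sol: "is_solution H eps U u" and U: "open U" "bounded U" and eps: "eps > 0"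
    and HR: "\<forall>p. norm p \<ge> R \<longrightarrow> H p > 0" and R: "R > 0"
    and ext: "ball z \<rho> \<inter> U = {}" and \<rho>: "\<rho> > 0"
    and D: "\<forall>y\<in>U. norm (y - z) \<le> D" "D > 0" and K: "R * D ^ (2 * CARD('n) + 1) \<le> K"
    and y: "y \<in> closure U"
  shows "zero_ext U u y \<le> barrier K \<rho> z y"
proof -
  have K0: "K \<ge> 0" using R D(2) K by (smt (verit) mult_pos_pos zero_less_power)
  have far: "\<rho> \<le> norm (y - z)" if "y \<in> closure U" for y
    using norm_ge_if_ball_disjoint[OF ext that] .
  have "zero_ext U u y - barrier K \<rho> z y \<le> 0"
  proof (rule le_on_closure_if_no_interior_local_max[OF U _ _ _ y])
    have "continuous_on (closure U) (barrier K \<rho> z)"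
      using far \<rho> unfolding barrier_def by (force intro!: continuous_intros)
    then show "continuous_on (closure U) (\<lambda>y. zero_ext U u y - barrier K \<rho> z y)"
      using continuous_on_zero_ext_solution[OF sol U(1)]
      by (auto intro!: continuous_intros intro: continuous_on_subset)
  next
    fix x assume x: "x \<in> U" and "\<exists>\<delta>>0. \<forall>y. dist y x < \<delta> \<longrightarrow>
        zero_ext U u y - barrier K \<rho> z y \<le> zero_ext U u x - barrier K \<rho> z x"
    moreover have "x \<noteq> z" using x ext \<rho> centre_in_ball by blast
    ultimately show False
      using solution_minus_barrier_no_local_max[OF sol U(1) eps HR R x _ _ K] D(1) by blast
  next
    fix y assume y: "y \<in> frontier U"
    then have "1 / (norm (y - z) ^ 2) ^ CARD('n) \<le> 1 / \<rho> ^ (2 * CARD('n))"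
      using far[of y] \<rho> by (simp add: frontier_def power_mult[symmetric] frac_le power_mono)
    then have "barrier K \<rho> z y \<ge> 0" using K0 by (simp add: barrier_def)
    moreover have "y \<notin> U" using y U(1) by (simp add: frontier_def interior_open)
    ultimately show "zero_ext U u y - barrier K \<rho> z y \<le> 0" by (simp add: zero_ext_def)
  qed
  then show ?thesis by simp
qed

lemma solution_le_linear_at_exterior_ball:
  fixes u :: "real^'n \<Rightarrow> real"
  assumes sol: "is_solution H eps U u" and U: "open U" "bounded U" and eps: "eps > 0"
    and HR: "\<forall>p. norm p \<ge> R \<longrightarrow> H p > 0" and R: "R > 0"
    and ext: "ball z \<rho> \<inter> U = {}" and \<rho>: "\<rho> > 0" and x0: "dist x0 z = \<rho>"
    and D: "\<forall>y\<in>U. norm (y - z) \<le> D" "D > 0"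
  defines "N \<equiv> CARD('n)"
  shows "zero_ext U u y \<le> R * D ^ (2 * N + 1) * real (2 * N) * norm (y - x0) / \<rho> ^ (2 * N + 1)"
proof (cases "y \<in> U")
  case True
  define K where "K = R * D ^ (2 * N + 1)"
  define b where "b = norm (y - z)"
  have K0: "K > 0" using R D by (simp add: K_def)
  have "\<rho> \<le> b" unfolding b_def using norm_ge_if_ball_disjoint[OF ext] True closure_subset by blast
  have "zero_ext U u y \<le> barrier K \<rho> z y"
    using solution_le_barrier[OF sol U eps HR R ext \<rho> D] True closure_subset by (auto simp: K_def N_def)
  also have "barrier K \<rho> z y = K * (1 / \<rho> ^ (2 * N) - 1 / b ^ (2 * N))"
    unfolding barrier_def b_def N_def by (simp add: power_mult)
  also have "\<dots> \<le> K * (real (2 * N) * (b - \<rho>) / \<rho> ^ (2 * N + 1))"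
    using one_over_power_diff_le[OF \<rho> \<open>\<rho> \<le> b\<close>, of "2 * N"] K0 by (intro mult_left_mono) (auto simp: N_def)
  also have "\<dots> \<le> K * (real (2 * N) * norm (y - x0) / \<rho> ^ (2 * N + 1))"
  proof -
    have "b \<le> norm (y - x0) + norm (x0 - z)"
      unfolding b_def using norm_triangle_ineq[of "y - x0" "x0 - z"] by simp
    then have "b - \<rho> \<le> norm (y - x0)" using x0 by (simp add: dist_norm)
    then show ?thesis using K0 \<rho> by (intro mult_left_mono divide_right_mono) auto
  qed
  finally show ?thesis by (simp add: K_def)
qed (use R D \<rho> in \<open>simp add: zero_ext_def\<close>)

section \<open>Comparison with rescaled translates\<close>

text \<open>Condition (H3) says that \<open>s \<mapsto> s\<^sup>-\<^sup>\<gamma> H(s p)\<close> is strictly increasing.\<close>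

lemma value_scaleR_lt_powr:
  fixes H :: "real^'n \<Rightarrow> real"
  assumes diff: "\<And>p. H differentiable (at p)" and H3: "\<forall>p. grad H p \<bullet> p - \<gamma> * H p \<ge> \<delta>"
    and \<delta>: "\<delta> > 0" and \<mu>: "0 < \<mu>" "\<mu> < 1"
  shows "H (\<mu> *\<^sub>R p) < \<mu> powr \<gamma> * H p"
proof -
  define g where "g s = H (s *\<^sub>R p) * s powr (- \<gamma>)" for s
  define g' where "g' s = (grad H (s *\<^sub>R p) \<bullet> p) * s powr (- \<gamma>)
      + H (s *\<^sub>R p) * ((- \<gamma>) * s powr (- \<gamma> - 1))" for s
  have der: "(g has_real_derivative g' s) (at s)" if "s > 0" for s
  proof -
    have a: "((\<lambda>s. H (0 + s *\<^sub>R p)) has_real_derivative grad H (0 + s *\<^sub>R p) \<bullet> p) (at s)"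
      by (rule has_real_derivative_along_line_grad) (rule diff)
    have b: "((\<lambda>s. s powr (- \<gamma>)) has_real_derivative (- \<gamma>) * s powr (- \<gamma> - 1)) (at s)"
      using has_real_derivative_powr[OF that] .
    show ?thesis using DERIV_mult'[OF a b] unfolding g_def g'_def by simp
  qed
  have pos: "g' s > 0" if "s > 0" for s
  proof -
    have "s powr (- \<gamma>) = s powr (1 + (- \<gamma> - 1))" by simp
    also have "\<dots> = s powr 1 * s powr (- \<gamma> - 1)" by (rule powr_add)
    also have "\<dots> = s * s powr (- \<gamma> - 1)" using that by simp
    finally have "s powr (- \<gamma>) = s * s powr (- \<gamma> - 1)" .
    then have "g' s = s powr (- \<gamma> - 1) * (grad H (s *\<^sub>R p) \<bullet> (s *\<^sub>R p) - \<gamma> * H (s *\<^sub>R p))"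
      unfolding g'_def using that by (simp add: algebra_simps)
    moreover have "grad H (s *\<^sub>R p) \<bullet> (s *\<^sub>R p) - \<gamma> * H (s *\<^sub>R p) > 0"
      using H3 \<delta> by (smt (verit))
    ultimately show ?thesis using that by simp
  qed
  obtain z where z: "z > \<mu>" "z < 1" "g 1 - g \<mu> = (1 - \<mu>) * g' z"
    using MVT2[of \<mu> 1 g g'] der \<mu> by auto
  have "(1 - \<mu>) * g' z > 0" using pos[of z] z \<mu> by simp
  then have "H (\<mu> *\<^sub>R p) * \<mu> powr (- \<gamma>) < H p" using z by (simp add: g_def)
  then have "H (\<mu> *\<^sub>R p) * \<mu> powr (- \<gamma>) * \<mu> powr \<gamma> < H p * \<mu> powr \<gamma>"
    using \<mu> by (intro mult_strict_right_mono) auto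
  moreover have "\<mu> powr (- \<gamma>) * \<mu> powr \<gamma> = 1" using \<mu> by (simp add: powr_minus)
  ultimately show ?thesis by (simp only: mult.assoc mult_1_right) (simp add: mult.commute)
qed

text \<open>By the scaling inequality, \<open>v(y) = (\<mu>/k) u(k y)\<close> is a strict subsolution,
  \<open>H(Dv) < \<epsilon> \<Delta>v\<close>, so \<open>v\<close> cannot touch the solution \<open>u(h + \<cdot>)\<close> from below.\<close>

lemma solution_scaled_minus_translated_no_local_max:
  fixes u :: "real^'n \<Rightarrow> real"
  assumes sol: "is_solution H eps U u" and U: "open U" and eps: "eps > 0"
    and k: "k > 0" and scale: "\<And>p. H (\<mu> *\<^sub>R p) < \<mu> * k * H p"
    and x: "k *\<^sub>R x \<in> U" "h + x \<in> U"
    and max: "\<exists>\<delta>>0. \<forall>y. dist y x < \<delta> \<longrightarrow>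
       \<mu> / k * zero_ext U u (k *\<^sub>R y) - zero_ext U u (h + y)
       \<le> \<mu> / k * zero_ext U u (k *\<^sub>R x) - zero_ext U u (h + x)"
  shows False
proof -
  have u: "C_k_on 2 U u" using sol by (simp add: is_solution_def)
  have U_eq: "\<forall>y\<in>U. zero_ext U u y = u y" by (simp add: zero_ext_def)
  have x': "0 + k *\<^sub>R x \<in> U" "h + 1 *\<^sub>R x \<in> U" using x by simp_all
  have v: "coord_derivs2 (\<lambda>y. \<mu> / k * zero_ext U u (k *\<^sub>R y)) x i
      (\<lambda>t. \<mu> * partial_deriv i u (k *\<^sub>R x + (k * t) *\<^sub>R axis i 1))
      (\<mu> * k * partial_deriv i (partial_deriv i u) (k *\<^sub>R x))" for i
    using coord_derivs2_affine[OF coord_derivs2_C2[OF u U x'(1) U_eq] k, of "\<mu> / k"] k by simp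
  have w: "coord_derivs2 (\<lambda>y. zero_ext U u (h + y)) x i
      (\<lambda>t. partial_deriv i u (h + x + t *\<^sub>R axis i 1)) (partial_deriv i (partial_deriv i u) (h + x))" for i
    using coord_derivs2_affine[OF coord_derivs2_C2[OF u U x'(2) U_eq] zero_less_one, where A = 1] by simp
  have D1: "partial_deriv i u (h + x) = \<mu> * partial_deriv i u (k *\<^sub>R x)"
    and D2: "\<mu> * k * partial_deriv i (partial_deriv i u) (k *\<^sub>R x)
        \<le> partial_deriv i (partial_deriv i u) (h + x)" for i
    using coord_derivs2_local_max_diff[OF max v w] by simp_all
  have "grad u (h + x) = \<mu> *\<^sub>R grad u (k *\<^sub>R x)" using D1 by (simp add: grad_def vec_eq_iff)
  then have "H (grad u (h + x)) < \<mu> * k * H (grad u (k *\<^sub>R x))" using scale by simp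
  also have "\<dots> = eps * (\<mu> * k * laplacian u (k *\<^sub>R x))"
    using sol x by (simp add: is_solution_def)
  also have "\<dots> \<le> eps * laplacian u (h + x)"
    unfolding laplacian_def sum_distrib_left using D2 eps by (intro mult_left_mono sum_mono) auto
  also have "\<dots> = H (grad u (h + x))" using sol x by (simp add: is_solution_def)
  finally show False by simp
qed

lemma norm_scaleR_minus_translate_le:
  fixes h y :: "'a::real_normed_vector"
  assumes "norm (h + y) \<le> B"
  shows "norm (k *\<^sub>R y - (h + y)) \<le> norm h + \<bar>k - 1\<bar> * (B + norm h)"
proof -
  have "norm y \<le> B + norm h" using assms norm_triangle_ineq4[of "h + y" h] by simp
  then have "norm ((k - 1) *\<^sub>R y) \<le> \<bar>k - 1\<bar> * (B + norm h)" by (simp add: mult_left_mono)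
  have "norm (k *\<^sub>R y - (h + y)) = norm ((k - 1) *\<^sub>R y - h)"
    by (rule arg_cong[where f = norm]) (simp add: algebra_simps)
  also have "\<dots> \<le> norm ((k - 1) *\<^sub>R y) + norm h" by (rule norm_triangle_ineq4)
  finally show ?thesis using \<open>norm ((k - 1) *\<^sub>R y) \<le> _\<close> by simp
qed

lemma scaled_translated_inter:
  fixes U :: "'a::real_normed_vector set"
  assumes U: "open U" "bounded U"
  shows "open ({y. k *\<^sub>R y \<in> U} \<inter> {y. h + y \<in> U})" "bounded ({y. k *\<^sub>R y \<in> U} \<inter> {y. h + y \<in> U})"
    "closure ({y. k *\<^sub>R y \<in> U} \<inter> {y. h + y \<in> U}) \<subseteq> {y. k *\<^sub>R y \<in> closure U} \<inter> {y. h + y \<in> closure U}"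
proof -
  show "open ({y. k *\<^sub>R y \<in> U} \<inter> {y. h + y \<in> U})"
    using U(1) by (intro open_Int open_vimage[of U "\<lambda>y. k *\<^sub>R y", unfolded vimage_def]
        open_vimage[of U "\<lambda>y. h + y", unfolded vimage_def]) (auto intro!: continuous_intros)
  have "{y. k *\<^sub>R y \<in> U} \<inter> {y. h + y \<in> U} \<subseteq> (\<lambda>y. y - h) ` U" by (force simp: algebra_simps)
  then show "bounded ({y. k *\<^sub>R y \<in> U} \<inter> {y. h + y \<in> U})"
    using U(2) by (metis bounded_subset bounded_translation_minus)
  show "closure ({y. k *\<^sub>R y \<in> U} \<inter> {y. h + y \<in> U}) \<subseteq> {y. k *\<^sub>R y \<in> closure U} \<inter> {y. h + y \<in> closure U}"
  proof (rule closure_minimal)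
    show "{y. k *\<^sub>R y \<in> U} \<inter> {y. h + y \<in> U} \<subseteq> {y. k *\<^sub>R y \<in> closure U} \<inter> {y. h + y \<in> closure U}"
      using closure_subset by blast
    show "closed ({y. k *\<^sub>R y \<in> closure U} \<inter> {y. h + y \<in> closure U})"
      by (intro closed_Int closed_vimage[of "closure U" "\<lambda>y. k *\<^sub>R y", unfolded vimage_def]
          closed_vimage[of "closure U" "\<lambda>y. h + y", unfolded vimage_def]) (auto intro!: continuous_intros)
  qed
qed

lemma solution_scaled_minus_translated_le_outside:
  fixes u :: "real^'n \<Rightarrow> real"
  assumes sol: "is_solution H eps U u" and U: "open U" "bounded U" and eps: "eps > 0"
    and H0: "H 0 < 0" and \<mu>: "\<mu> > 0" and k: "k > 0"
    and frontier: "\<forall>x0\<in>frontier U. \<forall>y. zero_ext U u y \<le> C * norm (y - x0)" and C: "C \<ge> 0"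
    and B: "\<forall>y\<in>closure U. norm y \<le> B"
    and y: "k *\<^sub>R y \<in> closure U" "h + y \<in> closure U" "k *\<^sub>R y \<notin> U \<or> h + y \<notin> U"
  shows "\<mu> / k * zero_ext U u (k *\<^sub>R y) - zero_ext U u (h + y)
     \<le> \<mu> / k * C * (norm h + \<bar>k - 1\<bar> * (B + norm h))"
proof (cases "k *\<^sub>R y \<in> U")
  case False
  have hy: "norm (h + y) \<le> B" using B y(2) by blast
  then have "B \<ge> 0" using norm_ge_zero[of "h + y"] by linarith
  then have "\<mu> / k * C * (norm h + \<bar>k - 1\<bar> * (B + norm h)) \<ge> 0"
    using \<mu> k C by (intro mult_nonneg_nonneg add_nonneg_nonneg) auto
  then show ?thesis using False solution_nonneg[OF sol U eps H0, of "h + y"] by (simp add: zero_ext_def)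
next
  case True
  then have "h + y \<notin> U" using y(3) by blast
  then have "h + y \<in> frontier U" using y(2) U(1) by (simp add: frontier_def interior_open)
  then have "zero_ext U u (k *\<^sub>R y) \<le> C * norm (k *\<^sub>R y - (h + y))" using frontier by blast
  also have "\<dots> \<le> C * (norm h + \<bar>k - 1\<bar> * (B + norm h))"
    using norm_scaleR_minus_translate_le B y(2) C by (blast intro: mult_left_mono)
  finally have "\<mu> / k * zero_ext U u (k *\<^sub>R y) \<le> \<mu> / k * (C * (norm h + \<bar>k - 1\<bar> * (B + norm h)))"
    using \<mu> k by (intro mult_left_mono) auto
  moreover have "zero_ext U u (h + y) = 0" using \<open>h + y \<notin> U\<close> by (simp add: zero_ext_def)
  ultimately show ?thesis by (simp add: mult.assoc)
qed

lemma solution_scaled_minus_translated_le: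
  fixes u :: "real^'n \<Rightarrow> real"
  assumes sol: "is_solution H eps U u" and U: "open U" "bounded U" and eps: "eps > 0"
    and H0: "H 0 < 0" and \<mu>: "\<mu> > 0" and k: "k > 0" and scale: "\<And>p. H (\<mu> *\<^sub>R p) < \<mu> * k * H p"
    and frontier: "\<forall>x0\<in>frontier U. \<forall>y. zero_ext U u y \<le> C * norm (y - x0)" and C: "C \<ge> 0"
    and B: "\<forall>y\<in>closure U. norm y \<le> B"
    and x: "k *\<^sub>R x \<in> U" "h + x \<in> U"
  shows "\<mu> / k * zero_ext U u (k *\<^sub>R x) - zero_ext U u (h + x)
     \<le> \<mu> / k * C * (norm h + \<bar>k - 1\<bar> * (B + norm h))"
proof -
  define \<Omega> where "\<Omega> = {y. k *\<^sub>R y \<in> U} \<inter> {y. h + y \<in> U}"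
  note \<Omega> = scaled_translated_inter[OF U, of k h, folded \<Omega>_def]
  have cont: "continuous_on (closure \<Omega>)
      (\<lambda>y. \<mu> / k * zero_ext U u (k *\<^sub>R y) - zero_ext U u (h + y))"
    by (intro continuous_intros continuous_on_compose2[OF continuous_on_zero_ext_solution[OF sol U(1)]])
      auto
  show ?thesis
  proof (rule le_on_closure_if_no_interior_local_max[OF \<Omega>(1,2) cont])
    fix y assume "y \<in> \<Omega>" and max: "\<exists>\<delta>>0. \<forall>y'. dist y' y < \<delta> \<longrightarrow>
       \<mu> / k * zero_ext U u (k *\<^sub>R y') - zero_ext U u (h + y')
       \<le> \<mu> / k * zero_ext U u (k *\<^sub>R y) - zero_ext U u (h + y)"
    then show False
      using solution_scaled_minus_translated_no_local_max[OF sol U(1) eps k scale _ _ max]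
      by (simp add: \<Omega>_def)
  next
    fix y assume "y \<in> frontier \<Omega>"
    then have "y \<notin> \<Omega>" "k *\<^sub>R y \<in> closure U" "h + y \<in> closure U"
      using \<Omega>(1,3) by (auto simp: frontier_def interior_open)
    then show "\<mu> / k * zero_ext U u (k *\<^sub>R y) - zero_ext U u (h + y)
        \<le> \<mu> / k * C * (norm h + \<bar>k - 1\<bar> * (B + norm h))"
      using solution_scaled_minus_translated_le_outside[OF sol U eps H0 \<mu> k frontier C B] by (simp add: \<Omega>_def)
  next
    show "x \<in> closure \<Omega>" using x closure_subset[of \<Omega>] by (auto simp: \<Omega>_def)
  qed
qed

text \<open>Letting \<open>\<mu> \<rightarrow> 1\<close> with \<open>k = \<mu>\<^bsup>\<gamma>-1\<^esup>\<close> (so that \<open>\<mu> k = \<mu>\<^sup>\<gamma>\<close>) turns the comparison into a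
  one-sided Lipschitz bound.\<close>

lemma solution_translate_diff_le:
  fixes u :: "real^'n \<Rightarrow> real"
  assumes sol: "is_solution H eps U u" and U: "open U" "bounded U" and eps: "eps > 0"
    and H0: "H 0 < 0" and scale: "\<forall>\<mu> p. 0 < \<mu> \<and> \<mu> < 1 \<longrightarrow> H (\<mu> *\<^sub>R p) < \<mu> powr \<gamma> * H p"
    and frontier: "\<forall>x0\<in>frontier U. \<forall>y. zero_ext U u y \<le> C * norm (y - x0)" and C: "C \<ge> 0"
    and B: "\<forall>y\<in>closure U. norm y \<le> B"
    and x: "x \<in> U" "h + x \<in> U"
  shows "zero_ext U u x - zero_ext U u (h + x) \<le> C * norm h"
proof -
  let ?k = "\<lambda>\<mu>::real. \<mu> powr (\<gamma> - 1)"
  let ?F = "at_left (1::real)"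
  have "((\<lambda>\<mu>::real. \<mu> powr (\<gamma> - 1)) \<longlongrightarrow> 1 powr (\<gamma> - 1)) ?F"
    by (rule tendsto_powr) (auto intro!: tendsto_intros)
  then have k1: "(?k \<longlongrightarrow> 1) ?F" by simp
  have kx: "((\<lambda>\<mu>. ?k \<mu> *\<^sub>R x) \<longlongrightarrow> x) ?F"
    using tendsto_scaleR[OF k1 tendsto_const[of x]] by simp
  have "\<forall>\<^sub>F \<mu> in ?F. ?k \<mu> *\<^sub>R x \<in> U" using topological_tendstoD[OF kx U(1) x(1)] .
  moreover have "\<forall>\<^sub>F \<mu> in ?F. \<mu> \<in> {0<..<1}" by (rule eventually_at_left_real) simp
  ultimately have "\<forall>\<^sub>F \<mu> in ?F. \<mu> / ?k \<mu> * zero_ext U u (?k \<mu> *\<^sub>R x) - zero_ext U u (h + x)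
      \<le> \<mu> / ?k \<mu> * C * (norm h + \<bar>?k \<mu> - 1\<bar> * (B + norm h))"
  proof eventually_elim
    case (elim \<mu>)
    have "\<mu> * ?k \<mu> = \<mu> powr \<gamma>"
      using elim powr_add[of \<mu> 1 "\<gamma> - 1"] by simp
    then show ?case
      using solution_scaled_minus_translated_le[OF sol U eps H0 _ _ _ frontier C B] scale elim x(2)
      by simp
  qed
  moreover have "((\<lambda>\<mu>. \<mu> / ?k \<mu> * zero_ext U u (?k \<mu> *\<^sub>R x) - zero_ext U u (h + x))
      \<longlongrightarrow> 1 / 1 * zero_ext U u x - zero_ext U u (h + x)) ?F"
    by (intro tendsto_intros k1 continuous_on_tendsto_compose[OF
          continuous_on_zero_ext_solution[OF sol U(1)] kx]) auto
  moreover have "((\<lambda>\<mu>. \<mu> / ?k \<mu> * C * (norm h + \<bar>?k \<mu> - 1\<bar> * (B + norm h)))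
      \<longlongrightarrow> 1 / 1 * C * (norm h + \<bar>1 - 1\<bar> * (B + norm h))) ?F"
    by (intro tendsto_intros k1) auto
  ultimately have "1 / 1 * zero_ext U u x - zero_ext U u (h + x)
      \<le> 1 / 1 * C * (norm h + \<bar>1 - 1\<bar> * (B + norm h))"
    by (intro tendsto_le[of ?F]) auto
  then show ?thesis by simp
qed

lemma abs_DERIV_le_lipschitz:
  fixes f :: "real \<Rightarrow> real"
  assumes d: "(f has_real_derivative D) (at 0)" and r: "r > 0"
    and lip: "\<And>t. \<bar>t\<bar> < r \<Longrightarrow> \<bar>f t - f 0\<bar> \<le> L * \<bar>t\<bar>"
  shows "\<bar>D\<bar> \<le> L"
proof -
  have "((\<lambda>h. \<bar>(f (0 + h) - f 0) / h\<bar>) \<longlongrightarrow> \<bar>D\<bar>) (at 0)"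
    using d by (intro tendsto_rabs) (simp add: DERIV_def)
  moreover have "\<forall>\<^sub>F h in at (0::real). h \<noteq> 0 \<and> dist h 0 < r"
    using r by (auto simp: eventually_at intro!: exI[of _ r])
  then have "\<forall>\<^sub>F h in at (0::real). \<bar>(f (0 + h) - f 0) / h\<bar> \<le> L"
    by eventually_elim (use lip in \<open>simp add: abs_divide divide_le_eq\<close>)
  ultimately show ?thesis by (intro tendsto_le[of "at 0"]) auto
qed

lemma norm_grad_le_lipschitz:
  fixes u :: "real^'n \<Rightarrow> real"
  assumes U: "open U" "x \<in> U" and u: "u differentiable (at x)"
    and lip: "\<forall>y\<in>U. \<bar>u y - u x\<bar> \<le> L * norm (y - x)"
  shows "norm (grad u x) \<le> real CARD('n) * L"
proof -
  obtain r where r: "r > 0" "ball x r \<subseteq> U" using U openE by blast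
  have partial: "\<bar>partial_deriv i u x\<bar> \<le> L" for i
  proof (rule abs_DERIV_le_lipschitz[OF _ r(1)])
    show "((\<lambda>t. u (x + t *\<^sub>R axis i 1)) has_real_derivative partial_deriv i u x) (at 0)"
      using has_real_derivative_along_line_grad[of u x 0 "axis i 1"] u by (simp add: grad_inner_axis)
    fix t :: real assume t: "\<bar>t\<bar> < r"
    have "x + t *\<^sub>R axis i 1 \<in> U" using r t by (auto simp: dist_norm)
    then show "\<bar>u (x + t *\<^sub>R axis i 1) - u (x + 0 *\<^sub>R axis i 1)\<bar> \<le> L * \<bar>t\<bar>" using lip by force
  qed
  have "norm (grad u x) \<le> (\<Sum>i\<in>UNIV. \<bar>grad u x $ i\<bar>)" by (rule norm_le_l1_cart)
  also have "\<dots> \<le> (\<Sum>i\<in>(UNIV::'n set). L)" using partial by (intro sum_mono) (simp add: grad_def)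
  finally show ?thesis by simp
qed

section \<open>A uniform exterior ball\<close>

lemma Taylor_second_order_lower_bound:
  fixes g g' g'' :: "real \<Rightarrow> real"
  assumes d1: "\<And>t. 0 \<le> t \<Longrightarrow> t \<le> 1 \<Longrightarrow> (g has_real_derivative g' t) (at t)"
    and d2: "\<And>t. 0 \<le> t \<Longrightarrow> t \<le> 1 \<Longrightarrow> (g' has_real_derivative g'' t) (at t)"
    and lower: "\<And>t. 0 \<le> t \<Longrightarrow> t \<le> 1 \<Longrightarrow> g'' t \<ge> - M"
  shows "g 1 \<ge> g 0 + g' 0 - M / 2"
proof -
  define h where "h t = g t - g 0 - g' 0 * t + M * t^2 / 2" for t
  define h' where "h' t = g' t - g' 0 + M * t" for t
  have dh: "(h has_real_derivative h' t) (at t)" if "0 \<le> t" "t \<le> 1" for t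
    unfolding h_def h'_def using d1[OF that] by (auto intro!: derivative_eq_intros)
  have dh': "(h' has_real_derivative g'' t + M) (at t)" if "0 \<le> t" "t \<le> 1" for t
    unfolding h'_def using d2[OF that] by (auto intro!: derivative_eq_intros)
  have h'_nonneg: "h' t \<ge> 0" if "0 \<le> t" "t \<le> 1" for t
  proof -
    have "h' 0 \<le> h' t"
      by (rule DERIV_nonneg_imp_nondecreasing[OF that(1)]) (use dh' lower that in force)
    then show ?thesis by (simp add: h'_def)
  qed
  have "h 0 \<le> h 1"
    by (rule DERIV_nonneg_imp_nondecreasing[of 0 1]) (use dh h'_nonneg in force)+
  then show ?thesis by (simp add: h_def)
qed

lemma abs_hessian_form_le:
  fixes d :: "real^'n"
  shows "\<bar>\<Sum>i\<in>UNIV. d $ i * (\<Sum>j\<in>UNIV. d $ j * a i j)\<bar>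
    \<le> (norm d)^2 * (\<Sum>i\<in>UNIV. \<Sum>j\<in>UNIV. \<bar>a i j\<bar>)"
proof -
  have row: "\<bar>d $ i * (\<Sum>j\<in>UNIV. d $ j * a i j)\<bar> \<le> (\<Sum>j\<in>UNIV. \<bar>d $ i\<bar> * (\<bar>d $ j\<bar> * \<bar>a i j\<bar>))" for i
  proof -
    have "\<bar>\<Sum>j\<in>UNIV. d $ j * a i j\<bar> \<le> (\<Sum>j\<in>UNIV. \<bar>d $ j\<bar> * \<bar>a i j\<bar>)"
      using sum_abs[of "\<lambda>j. d $ j * a i j" UNIV] by (simp add: abs_mult)
    then have "\<bar>d $ i\<bar> * \<bar>\<Sum>j\<in>UNIV. d $ j * a i j\<bar> \<le> \<bar>d $ i\<bar> * (\<Sum>j\<in>UNIV. \<bar>d $ j\<bar> * \<bar>a i j\<bar>)"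
      by (rule mult_left_mono) simp
    then show ?thesis by (metis abs_mult sum_distrib_left)
  qed
  have "\<bar>\<Sum>i\<in>UNIV. d $ i * (\<Sum>j\<in>UNIV. d $ j * a i j)\<bar>
      \<le> (\<Sum>i\<in>UNIV. \<Sum>j\<in>UNIV. \<bar>d $ i\<bar> * (\<bar>d $ j\<bar> * \<bar>a i j\<bar>))"
    by (rule order_trans[OF sum_abs sum_mono], rule row)
  also have "\<dots> \<le> (\<Sum>i\<in>UNIV. \<Sum>j\<in>UNIV. norm d * (norm d * \<bar>a i j\<bar>))"
  proof (intro sum_mono)
    fix i j
    show "\<bar>d $ i\<bar> * (\<bar>d $ j\<bar> * \<bar>a i j\<bar>) \<le> norm d * (norm d * \<bar>a i j\<bar>)"
      using component_le_norm_cart[of d i] component_le_norm_cart[of d j]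
      by (simp add: mult_mono mult_right_mono)
  qed
  also have "\<dots> = (norm d)^2 * (\<Sum>i\<in>UNIV. \<Sum>j\<in>UNIV. \<bar>a i j\<bar>)"
    by (simp add: sum_distrib_left power2_eq_square mult.assoc)
  finally show ?thesis .
qed

lemma C2_segment_lower_bound:
  fixes \<phi> :: "real^'n \<Rightarrow> real"
  assumes \<phi>: "C_k_on 2 B \<phi>" and B: "open B" and seg: "\<And>t. 0 \<le> t \<Longrightarrow> t \<le> 1 \<Longrightarrow> x + t *\<^sub>R d \<in> B"
    and hessian: "\<And>t. 0 \<le> t \<Longrightarrow> t \<le> 1 \<Longrightarrow>
       (\<Sum>i\<in>UNIV. \<Sum>j\<in>UNIV. \<bar>partial_deriv j (partial_deriv i \<phi>) (x + t *\<^sub>R d)\<bar>) \<le> L"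
  shows "\<phi> (x + d) \<ge> \<phi> x + grad \<phi> x \<bullet> d - L * (norm d)^2 / 2"
proof -
  define g' where "g' t = (\<Sum>i\<in>UNIV. d $ i * partial_deriv i \<phi> (x + t *\<^sub>R d))" for t
  define g'' where "g'' t = (\<Sum>i\<in>UNIV. d $ i *
      (\<Sum>j\<in>UNIV. d $ j * partial_deriv j (partial_deriv i \<phi>) (x + t *\<^sub>R d)))" for t
  have "\<phi> (x + 1 *\<^sub>R d) \<ge> \<phi> (x + 0 *\<^sub>R d) + g' 0 - (L * (norm d)^2) / 2"
  proof (rule Taylor_second_order_lower_bound)
    fix t :: real assume t: "0 \<le> t" "t \<le> 1"
    note diff = C2_on_open_differentiable[OF \<phi> B seg[OF t]]
    show "((\<lambda>t. \<phi> (x + t *\<^sub>R d)) has_real_derivative g' t) (at t)"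
      unfolding g'_def using has_real_derivative_along_line_grad[of \<phi> x t d] diff
      by (simp add: grad_inner_eq_sum)
    show "(g' has_real_derivative g'' t) (at t)"
      unfolding g'_def g''_def
    proof (intro DERIV_sum DERIV_cmult)
      fix i
      show "((\<lambda>t. partial_deriv i \<phi> (x + t *\<^sub>R d)) has_real_derivative
          (\<Sum>j\<in>UNIV. d $ j * partial_deriv j (partial_deriv i \<phi>) (x + t *\<^sub>R d))) (at t)"
        using has_real_derivative_along_line_grad[of "partial_deriv i \<phi>" x t d] diff(2)
        by (simp add: grad_inner_eq_sum)
    qed
    have "\<bar>g'' t\<bar> \<le> (norm d)^2 * L"
      unfolding g''_def
      by (rule order_trans[OF abs_hessian_form_le mult_left_mono[OF hessian[OF t]]]) simp
    then show "g'' t \<ge> - (L * (norm d)^2)" by (simp add: mult.commute)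
  qed
  then show ?thesis by (simp add: g'_def grad_inner_eq_sum)
qed

lemma defining_fun_zero_on_frontier:
  fixes U :: "'a::metric_space set" and \<phi> :: "'a \<Rightarrow> real"
  assumes \<phi>: "continuous_on (ball x0 r) \<phi>" and U: "open U"
    and eq: "U \<inter> ball x0 r = {y\<in>ball x0 r. \<phi> y < 0}"
    and x: "x \<in> frontier U" "x \<in> ball x0 r"
  shows "\<phi> x = 0"
proof -
  have "x \<notin> U" using x(1) U by (simp add: frontier_def interior_open)
  then have "\<not> \<phi> x < 0" using x(2) eq by blast
  moreover have "\<not> \<phi> x > 0"
  proof
    assume "\<phi> x > 0"
    define W where "W = ball x0 r \<inter> \<phi> -` {0<..}"
    have "open W" unfolding W_def using continuous_open_preimage[OF \<phi>] by auto
    moreover have "x \<in> W" using x(2) \<open>\<phi> x > 0\<close> by (simp add: W_def)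
    moreover have "x \<in> closure U" using x(1) by (simp add: frontier_def)
    ultimately have "W \<inter> closure U \<noteq> {}" by blast
    then have "W \<inter> U \<noteq> {}" using open_Int_closure_eq_empty[OF \<open>open W\<close>] by blast
    then obtain y where "y \<in> W" "y \<in> U \<inter> ball x0 r" unfolding W_def by blast
    then show False unfolding eq by (simp add: W_def)
  qed
  ultimately show ?thesis by simp
qed

lemma in_ball_along_unit_vector:
  fixes d \<nu> :: "'a::real_inner"
  assumes \<nu>: "norm \<nu> = 1" and d: "norm (d - \<rho> *\<^sub>R \<nu>) < \<rho>"
  shows "(norm d)^2 < 2 * \<rho> * (\<nu> \<bullet> d)" "norm d < 2 * \<rho>"
proof -
  have "(d - \<rho> *\<^sub>R \<nu>) \<bullet> (d - \<rho> *\<^sub>R \<nu>) = d \<bullet> d - 2 * \<rho> * (\<nu> \<bullet> d) + \<rho>^2 * (\<nu> \<bullet> \<nu>)"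
    by (simp add: inner_diff_left inner_diff_right inner_commute power2_eq_square algebra_simps)
  then have "(norm (d - \<rho> *\<^sub>R \<nu>))^2 = (norm d)^2 - 2 * \<rho> * (\<nu> \<bullet> d) + \<rho>^2"
    using \<nu> by (simp add: power2_norm_eq_inner norm_eq_1)
  moreover have "(norm (d - \<rho> *\<^sub>R \<nu>))^2 < \<rho>^2" using d by (simp add: power_strict_mono)
  ultimately show "(norm d)^2 < 2 * \<rho> * (\<nu> \<bullet> d)" by simp
  have "\<rho> > 0" using d norm_ge_zero[of "d - \<rho> *\<^sub>R \<nu>"] by linarith
  then show "norm d < 2 * \<rho>" using d norm_triangle_ineq2[of d "\<rho> *\<^sub>R \<nu>"] \<nu> by simp
qed

lemma tangent_ball_above_level:
  fixes \<phi> :: "real^'n \<Rightarrow> real"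
  assumes \<phi>: "C_k_on 2 B \<phi>" "open B" and \<delta>: "cball x \<delta> \<subseteq> B"
    and hessian: "\<forall>y\<in>cball x \<delta>. (\<Sum>i\<in>UNIV. \<Sum>j\<in>UNIV. \<bar>partial_deriv j (partial_deriv i \<phi>) y\<bar>) \<le> L"
    and grad: "grad \<phi> x \<noteq> 0" and \<rho>: "\<rho> > 0" "2 * \<rho> \<le> \<delta>" "\<rho> * L \<le> norm (grad \<phi> x)"
    and y: "dist (x + (\<rho> / norm (grad \<phi> x)) *\<^sub>R grad \<phi> x) y < \<rho>"
  shows "\<phi> y > \<phi> x"
proof -
  define g where "g = grad \<phi> x"
  define \<nu> where "\<nu> = (1 / norm g) *\<^sub>R g"
  define d where "d = y - x"
  have g: "norm g > 0" using grad by (simp add: g_def)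
  have yz: "norm (d - \<rho> *\<^sub>R \<nu>) < \<rho>"
    using y by (simp add: dist_norm d_def \<nu>_def g_def algebra_simps norm_minus_commute)
  have "norm \<nu> = 1" using g by (simp add: \<nu>_def)
  note \<nu>d = in_ball_along_unit_vector[OF this yz]
  have seg: "x + t *\<^sub>R d \<in> cball x \<delta>" if "0 \<le> t" "t \<le> 1" for t
  proof -
    have "t * norm d \<le> norm d" using that by (simp add: mult_left_le_one_le)
    then show ?thesis using that \<nu>d(2) \<rho>(2) by (simp add: dist_norm)
  qed
  have "\<phi> (x + d) \<ge> \<phi> x + g \<bullet> d - L * (norm d)^2 / 2"
    unfolding g_def
  proof (rule C2_segment_lower_bound[OF \<phi>])
    fix t :: real assume t: "0 \<le> t" "t \<le> 1"
    show "x + t *\<^sub>R d \<in> B" using seg[OF t] \<delta> by blast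
    show "(\<Sum>i\<in>UNIV. \<Sum>j\<in>UNIV. \<bar>partial_deriv j (partial_deriv i \<phi>) (x + t *\<^sub>R d)\<bar>) \<le> L"
      using seg[OF t] hessian by blast
  qed
  moreover have "g \<bullet> d > L * (norm d)^2 / 2"
  proof -
    have "L * (norm d)^2 / 2 = \<rho> * L * ((norm d)^2 / (2 * \<rho>))" using \<rho>(1) by simp
    also have "\<dots> \<le> norm g * ((norm d)^2 / (2 * \<rho>))"
      using \<rho> by (intro mult_right_mono) (auto simp: g_def)
    also have "\<dots> < norm g * (\<nu> \<bullet> d)"
      using \<nu>d(1) \<rho>(1) g by (intro mult_strict_left_mono) (auto simp: field_simps)
    also have "\<dots> = g \<bullet> d" using g by (simp add: \<nu>_def)
    finally show ?thesis .
  qed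
  ultimately show ?thesis by (simp add: d_def)
qed

lemma C2_bounds_on_compact:
  fixes \<phi> :: "real^'n \<Rightarrow> real"
  assumes \<phi>: "C_k_on 2 B \<phi>" and K: "compact K" "K \<noteq> {}" "K \<subseteq> B"
    and grad: "\<forall>y\<in>B. grad \<phi> y \<noteq> 0"
  obtains c L where "c > 0" "\<forall>y\<in>K. c \<le> norm (grad \<phi> y)" "L \<ge> 0"
    "\<forall>y\<in>K. (\<Sum>i\<in>UNIV. \<Sum>j\<in>UNIV. \<bar>partial_deriv j (partial_deriv i \<phi>) y\<bar>) \<le> L"
proof -
  have cont_partial: "continuous_on B (partial_deriv i \<phi>)"
    and cont_hessian: "continuous_on B (partial_deriv j (partial_deriv i \<phi>))" for i j
    using \<phi> by (simp_all add: numeral_2_eq_2)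
  have "continuous_on K (\<lambda>y. norm (grad \<phi> y))"
    unfolding grad_def
    by (intro continuous_on_norm continuous_on_vec_lambda continuous_on_subset[OF cont_partial K(3)])
  then obtain p where p: "p \<in> K" "\<forall>y\<in>K. norm (grad \<phi> p) \<le> norm (grad \<phi> y)"
    using continuous_attains_inf[OF K(1,2)] by blast
  have "continuous_on K (\<lambda>y. \<Sum>i\<in>UNIV. \<Sum>j\<in>UNIV. \<bar>partial_deriv j (partial_deriv i \<phi>) y\<bar>)"
    by (intro continuous_intros continuous_on_subset[OF cont_hessian K(3)])
  then obtain q where q: "q \<in> K" "\<forall>y\<in>K.
      (\<Sum>i\<in>UNIV. \<Sum>j\<in>UNIV. \<bar>partial_deriv j (partial_deriv i \<phi>) y\<bar>)
      \<le> (\<Sum>i\<in>UNIV. \<Sum>j\<in>UNIV. \<bar>partial_deriv j (partial_deriv i \<phi>) q\<bar>)"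
    using continuous_attains_sup[OF K(1,2)] by blast
  show ?thesis
    by (rule that[OF _ p(2) _ q(2)]) (use grad p(1) K(3) in \<open>auto simp: sum_nonneg\<close>)
qed

lemma local_uniform_exterior_ball:
  fixes \<phi> :: "real^'n \<Rightarrow> real" and U :: "(real^'n) set"
  assumes r: "r > 0" and \<phi>: "smooth_on (ball x0 r) \<phi>" and grad: "\<forall>y\<in>ball x0 r. grad \<phi> y \<noteq> 0"
    and eq: "U \<inter> ball x0 r = {y\<in>ball x0 r. \<phi> y < 0}" and U: "open U"
  shows "\<exists>\<epsilon>>0. \<exists>\<rho>>0. \<forall>x\<in>frontier U. dist x x0 < \<epsilon> \<longrightarrow> (\<exists>z. dist x z = \<rho> \<and> ball z \<rho> \<inter> U = {})"
proof -
  define K where "K = cball x0 (r / 2)"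
  have K: "compact K" "K \<noteq> {}" "K \<subseteq> ball x0 r" using r by (auto simp: K_def)
  have \<phi>2: "C_k_on 2 (ball x0 r) \<phi>" using \<phi> by (simp add: smooth_on_def)
  obtain c L where c: "c > 0" "\<forall>y\<in>K. c \<le> norm (grad \<phi> y)" and L: "L \<ge> 0"
    "\<forall>y\<in>K. (\<Sum>i\<in>UNIV. \<Sum>j\<in>UNIV. \<bar>partial_deriv j (partial_deriv i \<phi>) y\<bar>) \<le> L"
    using C2_bounds_on_compact[OF \<phi>2 K] grad by blast
  define \<rho> where "\<rho> = min (r / 8) (c / (L + 1))"
  have \<rho>: "\<rho> > 0" "2 * \<rho> \<le> r / 4" using r c(1) L(1) by (auto simp: \<rho>_def)
  have "\<rho> * L \<le> c"
  proof -
    have "\<rho> * (L + 1) \<le> c" using L(1) by (simp add: \<rho>_def pos_le_divide_eq[symmetric])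
    then show ?thesis using \<rho>(1) by (simp add: algebra_simps)
  qed
  have "\<exists>z. dist x z = \<rho> \<and> ball z \<rho> \<inter> U = {}" if x: "x \<in> frontier U" "dist x x0 < r / 4" for x
  proof -
    have x_ball: "cball x (r / 4) \<subseteq> K"
    proof
      fix y assume "y \<in> cball x (r / 4)"
      then show "y \<in> K" using x(2) dist_triangle[of x0 y x] by (simp add: K_def dist_commute)
    qed
    then have "x \<in> ball x0 r" using K(3) r by (meson centre_in_cball less_imp_le subsetD zero_less_divide_iff zero_less_numeral)
    then have \<phi>x: "\<phi> x = 0" and gx: "grad \<phi> x \<noteq> 0"
      using defining_fun_zero_on_frontier[OF _ U eq x(1)] \<phi>2 grad by (simp_all add: numeral_2_eq_2)
    define z where "z = x + (\<rho> / norm (grad \<phi> x)) *\<^sub>R grad \<phi> x"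
    have "x \<in> K" using x_ball r by auto
    then have "\<rho> * L \<le> norm (grad \<phi> x)" using \<open>\<rho> * L \<le> c\<close> c(2) by force
    then have "\<phi> y > 0" if "dist z y < \<rho>" for y
      using tangent_ball_above_level[OF \<phi>2 open_ball order_trans[OF x_ball K(3)] _ gx \<rho>(1,2)] L(2) x_ball
        that \<phi>x by (force simp: z_def)
    moreover have xz: "dist x z = \<rho>" using gx \<rho>(1) by (simp add: z_def dist_norm)
    have "ball z \<rho> \<subseteq> cball x (r / 4)"
    proof
      fix y assume "y \<in> ball z \<rho>"
      then show "y \<in> cball x (r / 4)" using xz \<rho>(2) dist_triangle[of x y z] by simp
    qed
    then have "ball z \<rho> \<subseteq> ball x0 r" using x_ball K(3) by blast
    ultimately have "ball z \<rho> \<inter> U = {}" using eq by force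
    with xz show ?thesis by blast
  qed
  then show ?thesis using r \<rho>(1) by (intro exI[of _ "r / 4"] exI[of _ \<rho>]) auto
qed

lemma exterior_ball_shrink:
  fixes x z :: "'a::real_normed_vector"
  assumes "ball z \<rho> \<inter> U = {}" "dist x z = \<rho>" "0 < \<rho>'" "\<rho>' \<le> \<rho>"
  shows "\<exists>z'. dist x z' = \<rho>' \<and> ball z' \<rho>' \<inter> U = {}"
proof (intro exI[of _ "x + (\<rho>' / \<rho>) *\<^sub>R (z - x)"] conjI)
  define z' where "z' = x + (\<rho>' / \<rho>) *\<^sub>R (z - x)"
  have \<rho>: "\<rho> > 0" using assms by simp
  have nz: "norm (z - x) = \<rho>" using assms(2) by (simp add: dist_norm norm_minus_commute)
  show "dist x z' = \<rho>'" using \<rho> assms(3) nz by (simp add: z'_def dist_norm)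
  have "z - z' = (1 - \<rho>' / \<rho>) *\<^sub>R (z - x)" by (simp add: z'_def algebra_simps)
  then have "norm (z - z') = (1 - \<rho>' / \<rho>) * \<rho>" using nz assms(3,4) \<rho> by simp
  also have "\<dots> = \<rho> - \<rho>'" using \<rho> by (simp add: field_simps)
  finally have "dist z z' = \<rho> - \<rho>'" by (simp add: dist_norm)
  have "ball z' \<rho>' \<subseteq> ball z \<rho>"
  proof
    fix y assume "y \<in> ball z' \<rho>'"
    then show "y \<in> ball z \<rho>" using \<open>dist z z' = \<rho> - \<rho>'\<close> dist_triangle[of z y z'] by simp
  qed
  then show "ball z' \<rho>' \<inter> U = {}" using assms(1) by blast
qed

lemma uniform_exterior_ball:
  fixes U :: "(real^'n) set"
  assumes "smooth_bounded_domain U"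
  obtains \<rho> where "\<rho> > 0" "\<forall>x\<in>frontier U. \<exists>z. dist x z = \<rho> \<and> ball z \<rho> \<inter> U = {}"
proof -
  have U: "open U" "bounded U" using assms by (auto simp: smooth_bounded_domain_def)
  have "\<forall>x0\<in>frontier U. \<exists>\<epsilon>>0. \<exists>\<rho>>0. \<forall>x\<in>frontier U. dist x x0 < \<epsilon> \<longrightarrow>
      (\<exists>z. dist x z = \<rho> \<and> ball z \<rho> \<inter> U = {})"
  proof
    fix x0 assume "x0 \<in> frontier U"
    then obtain r \<phi> where "r > 0" "smooth_on (ball x0 r) \<phi>" "\<forall>y\<in>ball x0 r. grad \<phi> y \<noteq> 0"
      "U \<inter> ball x0 r = {y\<in>ball x0 r. \<phi> y < 0}"
      using assms unfolding smooth_bounded_domain_def by blast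
    then show "\<exists>\<epsilon>>0. \<exists>\<rho>>0. \<forall>x\<in>frontier U. dist x x0 < \<epsilon> \<longrightarrow>
        (\<exists>z. dist x z = \<rho> \<and> ball z \<rho> \<inter> U = {})"
      using local_uniform_exterior_ball[OF _ _ _ _ U(1)] by blast
  qed
  then obtain E where E: "\<forall>x0\<in>frontier U. E x0 > 0 \<and> (\<exists>\<rho>>0. \<forall>x\<in>frontier U. dist x x0 < E x0 \<longrightarrow>
      (\<exists>z. dist x z = \<rho> \<and> ball z \<rho> \<inter> U = {}))"
    by (metis (no_types, lifting) bchoice)
  then obtain P where EP: "\<forall>x0\<in>frontier U. E x0 > 0 \<and> P x0 > 0 \<and>
      (\<forall>x\<in>frontier U. dist x x0 < E x0 \<longrightarrow> (\<exists>z. dist x z = P x0 \<and> ball z (P x0) \<inter> U = {}))"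
    by (metis (no_types, lifting) bchoice)
  have cover: "frontier U \<subseteq> (\<Union>x0\<in>frontier U. ball x0 (E x0))" using E by force
  obtain T where T: "T \<subseteq> frontier U" "finite T" "frontier U \<subseteq> (\<Union>x0\<in>T. ball x0 (E x0))"
    using compactE_image[OF compact_frontier_bounded[OF U(2)] _ cover] by blast
  show ?thesis
  proof (cases "T = {}")
    case True
    then have "frontier U = {}" using T(3) by blast
    then show ?thesis using that[of 1] by simp
  next
    case False
    define \<rho> where "\<rho> = Min (P ` T)"
    have \<rho>: "\<rho> > 0" unfolding \<rho>_def using T False EP by (subst Min_gr_iff) auto
    have "\<exists>z. dist x z = \<rho> \<and> ball z \<rho> \<inter> U = {}" if x: "x \<in> frontier U" for x
    proof -
      obtain t where t: "t \<in> T" "x \<in> ball t (E t)" using T(3) x by blast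
      then have "dist x t < E t" by (simp add: dist_commute)
      then obtain z where "dist x z = P t" "ball z (P t) \<inter> U = {}" using EP T(1) t(1) x by blast
      moreover have "\<rho> \<le> P t" unfolding \<rho>_def using T t by simp
      ultimately show ?thesis using exterior_ball_shrink[of z "P t" U x \<rho>] \<rho> by blast
    qed
    then show ?thesis using that[OF \<rho>] by blast
  qed
qed

lemma pos_outside_ball_if_superlinear:
  fixes H :: "'a::real_normed_vector \<Rightarrow> real"
  assumes "filterlim (\<lambda>p. H p / norm p) at_top at_infinity"
  obtains R where "R > 0" "\<forall>p. norm p \<ge> R \<longrightarrow> H p > 0"
proof -
  have "\<forall>\<^sub>F p in at_infinity. 1 \<le> H p / norm p" using assms by (simp add: filterlim_at_top)
  then obtain b where b: "\<forall>p. b \<le> norm p \<longrightarrow> 1 \<le> H p / norm p"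
    by (auto simp: eventually_at_infinity)
  have "H p > 0" if "norm p \<ge> max b 1" for p
  proof -
    have "1 \<le> H p / norm p" "norm p > 0" using b that by auto
    then have "norm p \<le> H p" by (simp add: le_divide_eq)
    then show ?thesis using \<open>norm p > 0\<close> by linarith
  qed
  then show ?thesis using that[of "max b 1"] by simp
qed

lemma smooth_on_UNIV_differentiable:
  assumes "smooth_on UNIV f"
  shows "f differentiable (at p)"
proof -
  have "C_k_on 1 UNIV f" using assms by (simp add: smooth_on_def)
  then show ?thesis by (simp add: differentiable_on_eq_differentiable_at)
qed

lemma solution_le_frontier_lipschitz:
  fixes H :: "real^'n \<Rightarrow> real"
  assumes U: "smooth_bounded_domain U" and H2: "filterlim (\<lambda>p. H p / norm p) at_top at_infinity"
  obtains C where "C \<ge> 0" "\<And>eps u x0 y. is_solution H eps U u \<Longrightarrow> eps > 0 \<Longrightarrow> x0 \<in> frontier U \<Longrightarrow>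
    zero_ext U u y \<le> C * norm (y - x0)"
proof -
  have U': "open U" "bounded U" using U by (auto simp: smooth_bounded_domain_def)
  obtain R where R: "R > 0" "\<forall>p. norm p \<ge> R \<longrightarrow> H p > 0"
    using pos_outside_ball_if_superlinear[OF H2] by blast
  obtain \<rho> where \<rho>: "\<rho> > 0" "\<forall>x\<in>frontier U. \<exists>z. dist x z = \<rho> \<and> ball z \<rho> \<inter> U = {}"
    using uniform_exterior_ball[OF U] by blast
  obtain B where B: "\<forall>y\<in>closure U. norm y \<le> B" "B \<ge> 0"
    using bounded_closure[OF U'(2)] by (metis bounded_pos less_imp_le)
  define N where "N = CARD('n)"
  define D where "D = 2 * B + \<rho> + 1"
  have D: "D > 0" using B \<rho> by (simp add: D_def)
  have "zero_ext U u y \<le> R * D ^ (2 * N + 1) * real (2 * N) / \<rho> ^ (2 * N + 1) * norm (y - x0)"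
    if sol: "is_solution H eps U u" and eps: "eps > 0" and x0: "x0 \<in> frontier U" for eps u x0 y
  proof -
    obtain z where z: "dist x0 z = \<rho>" "ball z \<rho> \<inter> U = {}" using \<rho>(2) x0 by blast
    have "norm (y - z) \<le> D" if "y \<in> U" for y
    proof -
      have "norm y \<le> B" using B that closure_subset by blast
      moreover have "norm x0 \<le> B" using B x0 by (simp add: frontier_def)
      moreover have "norm z \<le> norm x0 + \<rho>"
        using z(1) norm_triangle_ineq2[of z x0] by (simp add: dist_norm norm_minus_commute)
      ultimately show ?thesis using norm_triangle_ineq4[of y z] by (simp add: D_def)
    qed
    then show ?thesis
      using solution_le_linear_at_exterior_ball[OF sol U' eps R(2,1) z(2) \<rho>(1) z(1) _ D, of y]
      by (simp add: N_def)
  qed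
  then show ?thesis using R(1) \<rho>(1) D by (intro that[of "R * D ^ (2 * N + 1) * real (2 * N) / \<rho> ^ (2 * N + 1)"]) auto
qed

lemma solution_lipschitz:
  fixes u :: "real^'n \<Rightarrow> real"
  assumes sol: "is_solution H eps U u" and U: "open U" "bounded U" and eps: "eps > 0"
    and H0: "H 0 < 0" and scale: "\<forall>\<mu> p. 0 < \<mu> \<and> \<mu> < 1 \<longrightarrow> H (\<mu> *\<^sub>R p) < \<mu> powr \<gamma> * H p"
    and frontier: "\<forall>x0\<in>frontier U. \<forall>y. zero_ext U u y \<le> C * norm (y - x0)" and C: "C \<ge> 0"
    and B: "\<forall>y\<in>closure U. norm y \<le> B" and x: "x \<in> U" and y: "y \<in> U"
  shows "\<bar>u y - u x\<bar> \<le> C * norm (y - x)"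
proof -
  note translate = solution_translate_diff_le[OF sol U eps H0 scale frontier C B]
  have "zero_ext U u x - zero_ext U u ((y - x) + x) \<le> C * norm (y - x)"
    using translate[OF x, of "y - x"] y by simp
  moreover have "zero_ext U u y - zero_ext U u ((x - y) + y) \<le> C * norm (x - y)"
    using translate[OF y, of "x - y"] x by simp
  ultimately show ?thesis using x y by (simp add: zero_ext_def norm_minus_commute abs_le_iff)
qed

lemma abs_solution_le:
  fixes u :: "real^'n \<Rightarrow> real"
  assumes sol: "is_solution H eps U u" and U: "open U" "bounded U" and eps: "eps > 0"
    and H0: "H 0 < 0" and frontier: "\<forall>x0\<in>frontier U. \<forall>y. zero_ext U u y \<le> C * norm (y - x0)"
    and C: "C \<ge> 0" and B: "\<forall>y\<in>closure U. norm y \<le> B" and x: "x \<in> U"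
  shows "\<bar>u x\<bar> \<le> 2 * B * C"
proof -
  have "U \<noteq> UNIV" using U(2) by auto
  then obtain x0 where x0: "x0 \<in> frontier U" using frontier_not_empty x by blast
  have "norm x \<le> B" "norm x0 \<le> B" using B x x0 closure_subset by (auto simp: frontier_def)
  then have "norm (x - x0) \<le> 2 * B" using norm_triangle_ineq4[of x x0] by simp
  moreover have "zero_ext U u x \<le> C * norm (x - x0)" using frontier x0 by blast
  then have "0 \<le> u x" "u x \<le> C * norm (x - x0)"
    using solution_nonneg[OF sol U eps H0, of x] x by (simp_all add: zero_ext_def)
  ultimately show ?thesis using C by (simp add: mult_left_mono mult.commute order_trans)
qed

theorem theorem3:
  fixes U :: "(real^'n) set" and H :: "real^'n \<Rightarrow> real"
    and u :: "real \<Rightarrow> real^'n \<Rightarrow> real"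
  assumes U: "smooth_bounded_domain U"
    and H1: "smooth_on UNIV H" "H 0 < 0"
    and H2: "filterlim (\<lambda>p. H p / norm p) at_top at_infinity"
    and H3: "\<exists>\<gamma>>0. \<exists>\<delta>>0. \<forall>p. grad H p \<bullet> p - \<gamma> * H p \<ge> \<delta>"
    and sol: "\<And>eps. 0 < eps \<Longrightarrow> eps < 1 \<Longrightarrow> is_solution H eps U (u eps)"
  shows "\<exists>C. \<forall>eps. 0 < eps \<and> eps < 1 \<longrightarrow>
           (\<forall>x\<in>U. \<bar>u eps x\<bar> \<le> C \<and> norm (grad (u eps) x) \<le> C)"
proof -
  have U': "open U" "bounded U" using U by (auto simp: smooth_bounded_domain_def)
  obtain \<gamma> \<delta> where "\<delta> > 0" "\<forall>p. grad H p \<bullet> p - \<gamma> * H p \<ge> \<delta>" using H3 by blast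
  then have scale: "\<forall>\<mu> p. 0 < \<mu> \<and> \<mu> < 1 \<longrightarrow> H (\<mu> *\<^sub>R p) < \<mu> powr \<gamma> * H p"
    using value_scaleR_lt_powr[OF smooth_on_UNIV_differentiable[OF H1(1)]] by blast
  obtain C where C: "C \<ge> 0" and frontier: "\<And>eps u x0 y. is_solution H eps U u \<Longrightarrow> eps > 0 \<Longrightarrow>
      x0 \<in> frontier U \<Longrightarrow> zero_ext U u y \<le> C * norm (y - x0)"
    using solution_le_frontier_lipschitz[OF U H2] by blast
  obtain B where B: "\<forall>y\<in>closure U. norm y \<le> B"
    using bounded_closure[OF U'(2)] by (auto simp: bounded_iff)
  have "\<bar>u eps x\<bar> \<le> 2 * B * C \<and> norm (grad (u eps) x) \<le> real CARD('n) * C"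
    if eps: "0 < eps" "eps < 1" and x: "x \<in> U" for eps x
  proof -
    have sol: "is_solution H eps U (u eps)" using sol eps by blast
    note frontier = frontier[OF sol eps(1)]
    have "\<forall>y\<in>U. \<bar>u eps y - u eps x\<bar> \<le> C * norm (y - x)"
      using solution_lipschitz[OF sol U' eps(1) H1(2) scale _ C B x] frontier by blast
    then show ?thesis
      using norm_grad_le_lipschitz[OF U'(1) x] C2_on_open_differentiable(1)[OF _ U'(1) x]
        abs_solution_le[OF sol U' eps(1) H1(2) _ C B x] frontier sol
      by (simp add: is_solution_def)
  qed
  then show ?thesis by (intro exI[of _ "max (2 * B * C) (real CARD('n) * C)"]) force
qed

end
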